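(* Let $\textnormal{R}\in\{\textnormal{ML},\textnormal{wML},\textnormal{C},\textnormal{S},\textnormal{CH},\textnormal{wCH}\}$, let $\omega\in\Omega$ be a path that is $\textnormal{R}$-random for a computable forecasting system $\varphi$, and let $\epsilon_1,\epsilon_2>0$. Then $\omega$ is $\textnormal{R}$-random for the interval forecast $\big[\liminf_{n\to\infty}\underline{\varphi}(\omega_{1:n})-\epsilon_1,\ \limsup_{n\to\infty}\overline{\varphi}(\omega_{1:n})+\epsilon_2\big]\cap[0,1].$
   Context: $\mathcal{X}=\{0,1\}$; $\Omega=\mathcal{X}^{\mathbb{N}}$ (paths); $\mathbb{S}=\bigcup_{n\geq0}\mathcal{X}^n$ (situations), $\square$ empty string, $|s|$ length, $\omega_{1:n}=(\omega_1,\dots,\omega_n)$, $\omega_{1:0}=\square$. $\mathcal{I}$: nonempty closed intervals $I\subseteq[0,1]$. A forecasting system is a map $\varphi:\mathbb{S}\to\mathcal{I}$, $\underline{\varphi}=\min\varphi$, $\overline{\varphi}=\max\varphi$; an interval forecast $I$ is identified with the constant forecasting system $s\mapsto I$. A real map $r$ on a countable effectively encoded set $\mathcal D$ is computable if there is a recursive $q:\mathcal{D}\times\mathbb{N}_0\to\mathbb{Q}$ with $|r(d)-q(d,n)|<2^{-n}$; lower semicomputable if there is a recursive $q$ with $q(d,n+1)\ge q(d,n)$ and $r(d)=\lim_nq(d,n)$. $\varphi$ computable if $\underline\varphi,\overline\varphi$ are. $\overline{E}_I(f)=\max_{p\in I}[pf(1)+(1-p)f(0)]$. A real process $F:\mathbb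 S\to\mathbb R$ is a supermartingale for $\varphi$ if $\overline{E}_{\varphi(s)}(F(s\,\cdot)-F(s))\le0$ for all $s$; a test supermartingale if also $F\ge0$, $F(\square)=1$. A multiplier process $D$ maps situations to gambles $\mathcal X\to\mathbb R$, generating $D^{\circledcirc}(x_1,\dots,x_n)=\prod_{k=0}^{n-1}D(x_{1:k})(x_{k+1})$; lower semicomputable if $(s,x)\mapsto D(s)(x)$ is. For path $\omega$ and forecasting system $\varphi$: ML-random if no lower semicomputable test supermartingale $T$ for $\varphi$ has $\limsup_nT(\omega_{1:n})=\infty$; wML-random if no test supermartingale for $\varphi$ of the form $D^{\circledcirc}$, $D$ lower semicomputable, has this; C-random if no computable test supermartingale for $\varphi$ has this; S-random if there is no computable test supermartingale $T$ for $\varphi$ and computable non-decreasing unbounded $\tau:\mathbb N_0\to\mathbb R_{\ge0}$ with $\limsup_n[T(\omega_{1:n})-\tau(n)]\ge0$; CH-random (resp. wCH-random) if for every recursive (resp. recursive and temporal, i.e. depending only on $|s|$) $S:\mathbb S\to\{0,1\}$ with $\sum_{k=0}^{n-1}S(\omega_{1:k})\to\infty$: $\liminf_n \frac{\sum_{k<n}S(\omega_{1:k})[\omega_{k+1}-\underline\varphi(\omega_{1:k})]}{\sum_{k<n}S(\omega_{1:k})}\ge0$ and $\limsup_n \frac{\sum_{k<n}S(\omega_{1:k})[\omega_{k+1}-\overline\varphi(\omega_{1:k})]}{\sum_{k<n}S(\omega_{1:k})}\le0$. *)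

theory Defs
  imports Complex_Main "HOL-Library.Nat_Bijection" "HOL-Library.Extended_Real"
begin

datatype recf = Zr | Sc | Pj nat | Cn recf "recf list" | Pr recf recf | Mn recf

inductive reval :: "recf \<Rightarrow> nat list \<Rightarrow> nat \<Rightarrow> bool" where
  zero: "reval Zr xs 0"
| succ: "reval Sc (x # xs) (Suc x)"
| proj: "i < length xs \<Longrightarrow> reval (Pj i) xs (xs ! i)"
| comp: "length ys = length gs \<Longrightarrow> (\<forall>i<length gs. reval (gs ! i) xs (ys ! i))
          \<Longrightarrow> reval f ys y \<Longrightarrow> reval (Cn f gs) xs y"
| prec0: "reval f xs y \<Longrightarrow> reval (Pr f g) (0 # xs) y"
| precS: "reval (Pr f g) (n # xs) r \<Longrightarrow> reval g (n # r # xs) y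
          \<Longrightarrow> reval (Pr f g) (Suc n # xs) y"
| mu: "reval f (n # xs) 0 \<Longrightarrow> (\<forall>m<n. \<exists>v. reval f (m # xs) (Suc v))
          \<Longrightarrow> reval (Mn f) xs n"

definition recursive1 :: "(nat \<Rightarrow> nat) \<Rightarrow> bool" where
  "recursive1 f \<longleftrightarrow> (\<exists>c. \<forall>x. reval c [x] (f x))"

text \<open>Situations are bool lists (True = 1, False = 0); paths are nat => bool,
  with omega k standing for omega_{k+1}.\<close>
definition enc_sit :: "bool list \<Rightarrow> nat" where
  "enc_sit s = list_encode (map of_bool s)"

definition enc_sitx :: "bool list \<times> bool \<Rightarrow> nat" where
  "enc_sitx p = prod_encode (enc_sit (fst p), of_bool (snd p))"

definition enc_nat :: "nat \<Rightarrow> nat" where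
  "enc_nat n = n"

definition rat_code :: "nat \<Rightarrow> real" where
  "rat_code n = (case prod_decode n of (a, b) \<Rightarrow> real_of_int (int_decode a) / real (Suc b))"

definition computable_on :: "('a \<Rightarrow> nat) \<Rightarrow> ('a \<Rightarrow> real) \<Rightarrow> bool" where
  "computable_on enc r \<longleftrightarrow> (\<exists>q. recursive1 q \<and>
     (\<forall>d n. \<bar>r d - rat_code (q (prod_encode (enc d, n)))\<bar> < (1/2) ^ n))"

definition lsc_on :: "('a \<Rightarrow> nat) \<Rightarrow> ('a \<Rightarrow> real) \<Rightarrow> bool" where
  "lsc_on enc r \<longleftrightarrow> (\<exists>q. recursive1 q \<and>
     (\<forall>d. (\<forall>n. rat_code (q (prod_encode (enc d, n))) \<le> rat_code (q (prod_encode (enc d, Suc n))))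
        \<and> (\<lambda>n. rat_code (q (prod_encode (enc d, n)))) \<longlonglongrightarrow> r d))"

definition recursive_sel :: "(bool list \<Rightarrow> bool) \<Rightarrow> bool" where
  "recursive_sel S \<longleftrightarrow> (\<exists>q. recursive1 q \<and> (\<forall>s. q (enc_sit s) = of_bool (S s)))"

definition prefix :: "(nat \<Rightarrow> bool) \<Rightarrow> nat \<Rightarrow> bool list" where
  "prefix \<omega> n = map \<omega> [0..<n]"

definition forecasting_system :: "(bool list \<Rightarrow> real set) \<Rightarrow> bool" where
  "forecasting_system \<phi> \<longleftrightarrow> (\<forall>s. \<exists>a b. 0 \<le> a \<and> a \<le> b \<and> b \<le> 1 \<and> \<phi> s = {a..b})"

definition lowerF :: "(bool list \<Rightarrow> real set) \<Rightarrow> bool list \<Rightarrow> real" where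
  "lowerF \<phi> s = Inf (\<phi> s)"

definition upperF :: "(bool list \<Rightarrow> real set) \<Rightarrow> bool list \<Rightarrow> real" where
  "upperF \<phi> s = Sup (\<phi> s)"

definition computable_fs :: "(bool list \<Rightarrow> real set) \<Rightarrow> bool" where
  "computable_fs \<phi> \<longleftrightarrow> computable_on enc_sit (lowerF \<phi>) \<and> computable_on enc_sit (upperF \<phi>)"

definition upperE :: "real set \<Rightarrow> (bool \<Rightarrow> real) \<Rightarrow> real" where
  "upperE I f = Sup ((\<lambda>p. p * f True + (1 - p) * f False) ` I)"

definition supermartingale :: "(bool list \<Rightarrow> real set) \<Rightarrow> (bool list \<Rightarrow> real) \<Rightarrow> bool" where
  "supermartingale \<phi> F \<longleftrightarrow> (\<forall>s. upperE (\<phi> s) (\<lambda>x. F (s @ [x]) - F s) \<le> 0)"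

definition test_supermartingale :: "(bool list \<Rightarrow> real set) \<Rightarrow> (bool list \<Rightarrow> real) \<Rightarrow> bool" where
  "test_supermartingale \<phi> T \<longleftrightarrow> supermartingale \<phi> T \<and> (\<forall>s. T s \<ge> 0) \<and> T [] = 1"

definition mult_proc :: "(bool list \<Rightarrow> bool \<Rightarrow> real) \<Rightarrow> bool list \<Rightarrow> real" where
  "mult_proc D s = (\<Prod>k<length s. D (take k s) (s ! k))"

definition unbounded_on :: "(bool list \<Rightarrow> real) \<Rightarrow> (nat \<Rightarrow> bool) \<Rightarrow> bool" where
  "unbounded_on T \<omega> \<longleftrightarrow> limsup (\<lambda>n. ereal (T (prefix \<omega> n))) = \<infinity>"

datatype rnotion = R_ML | R_wML | R_C | R_S | R_CH | R_wCH

definition random_ML :: "(bool list \<Rightarrow> real set) \<Rightarrow> (nat \<Rightarrow> bool) \<Rightarrow> bool" where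
  "random_ML \<phi> \<omega> \<longleftrightarrow> \<not> (\<exists>T. lsc_on enc_sit T \<and> test_supermartingale \<phi> T \<and> unbounded_on T \<omega>)"

definition random_wML :: "(bool list \<Rightarrow> real set) \<Rightarrow> (nat \<Rightarrow> bool) \<Rightarrow> bool" where
  "random_wML \<phi> \<omega> \<longleftrightarrow> \<not> (\<exists>D. lsc_on enc_sitx (\<lambda>(s, x). D s x)
      \<and> test_supermartingale \<phi> (mult_proc D) \<and> unbounded_on (mult_proc D) \<omega>)"

definition random_C :: "(bool list \<Rightarrow> real set) \<Rightarrow> (nat \<Rightarrow> bool) \<Rightarrow> bool" where
  "random_C \<phi> \<omega> \<longleftrightarrow> \<not> (\<exists>T. computable_on enc_sit T \<and> test_supermartingale \<phi> T \<and> unbounded_on T \<omega>)"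

definition random_S :: "(bool list \<Rightarrow> real set) \<Rightarrow> (nat \<Rightarrow> bool) \<Rightarrow> bool" where
  "random_S \<phi> \<omega> \<longleftrightarrow> \<not> (\<exists>T \<tau>. computable_on enc_sit T \<and> test_supermartingale \<phi> T
      \<and> computable_on enc_nat \<tau> \<and> mono \<tau> \<and> (\<forall>n. \<tau> n \<ge> 0) \<and> (\<forall>B. \<exists>n. \<tau> n > B)
      \<and> limsup (\<lambda>n. ereal (T (prefix \<omega> n) - \<tau> n)) \<ge> 0)"

definition CH_cond :: "(bool list \<Rightarrow> real set) \<Rightarrow> (nat \<Rightarrow> bool) \<Rightarrow> (bool list \<Rightarrow> bool) \<Rightarrow> bool" where
  "CH_cond \<phi> \<omega> Sel \<longleftrightarrow>
     (filterlim (\<lambda>n. \<Sum>k<n. of_bool (Sel (prefix \<omega> k)) :: real) at_top sequentially \<longrightarrow>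
       liminf (\<lambda>n. ereal ((\<Sum>k<n. of_bool (Sel (prefix \<omega> k)) * (of_bool (\<omega> k) - lowerF \<phi> (prefix \<omega> k)))
                          / (\<Sum>k<n. of_bool (Sel (prefix \<omega> k))))) \<ge> 0
     \<and> limsup (\<lambda>n. ereal ((\<Sum>k<n. of_bool (Sel (prefix \<omega> k)) * (of_bool (\<omega> k) - upperF \<phi> (prefix \<omega> k)))
                          / (\<Sum>k<n. of_bool (Sel (prefix \<omega> k))))) \<le> 0)"

definition random_CH :: "(bool list \<Rightarrow> real set) \<Rightarrow> (nat \<Rightarrow> bool) \<Rightarrow> bool" where
  "random_CH \<phi> \<omega> \<longleftrightarrow> (\<forall>Sel. recursive_sel Sel \<longrightarrow> CH_cond \<phi> \<omega> Sel)"

definition random_wCH :: "(bool list \<Rightarrow> real set) \<Rightarrow> (nat \<Rightarrow> bool) \<Rightarrow> bool" where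
  "random_wCH \<phi> \<omega> \<longleftrightarrow> (\<forall>Sel. recursive_sel Sel \<and> (\<exists>g. \<forall>s. Sel s = g (length s))
      \<longrightarrow> CH_cond \<phi> \<omega> Sel)"

fun is_random :: "rnotion \<Rightarrow> (bool list \<Rightarrow> real set) \<Rightarrow> (nat \<Rightarrow> bool) \<Rightarrow> bool" where
  "is_random R_ML = random_ML"
| "is_random R_wML = random_wML"
| "is_random R_C = random_C"
| "is_random R_S = random_S"
| "is_random R_CH = random_CH"
| "is_random R_wCH = random_wCH"

definition limit_interval :: "(bool list \<Rightarrow> real set) \<Rightarrow> (nat \<Rightarrow> bool) \<Rightarrow> real \<Rightarrow> real \<Rightarrow> real set" where
  "limit_interval \<phi> \<omega> e1 e2 =
     {real_of_ereal (liminf (\<lambda>n. ereal (lowerF \<phi> (prefix \<omega> n)))) - e1 ..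
      real_of_ereal (limsup (\<lambda>n. ereal (upperF \<phi> (prefix \<omega> n)))) + e2} \<inter> {0..1}"

end

theory Submission
  imports Defs
begin

text \<open>Along \<open>\<omega>\<close> the forecasts of \<open>\<phi>\<close> eventually lie in the limit interval \<open>I\<close>, and
  as \<open>\<phi>\<close> is computable there is a decidable set of situations on which \<open>\<phi>(s) \<subseteq> I\<close> that
  contains every long enough prefix of \<open>\<omega>\<close>. A test for \<open>I\<close> becomes a test for \<open>\<phi>\<close> by
  feeding it only the outcomes that follow situations of this set and by freezing it until a
  time \<open>N\<close> from which on all prefixes of \<open>\<omega>\<close> are in the set: it keeps its effectivity
  (computable, lower semicomputable or multiplicative) and along \<open>\<omega>\<close> it is a positive multiple
  of the original test. For the Church notions the selected averages change by at most \<open>N\<close>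
  divided by the number of selected steps, which tends to zero.\<close>

section \<open>Closure properties of recursive functions\<close>

definition recursive2 :: "(nat \<Rightarrow> nat \<Rightarrow> nat) \<Rightarrow> bool" where
  "recursive2 f \<longleftrightarrow> (\<exists>c. \<forall>x y. reval c [x, y] (f x y))"

lemma reval_Cn1: "reval g xs y \<Longrightarrow> reval f [y] z \<Longrightarrow> reval (Cn f [g]) xs z"
  by (rule reval.comp[of "[y]"]) auto

lemma reval_Cn2: "reval g xs y \<Longrightarrow> reval h xs y' \<Longrightarrow> reval f [y, y'] z \<Longrightarrow> reval (Cn f [g, h]) xs z"
  by (rule reval.comp[of "[y, y']"]) (auto simp: less_Suc_eq)

lemma reval_Pj0: "reval (Pj 0) (x # xs) x"
  using reval.proj[of 0 "x # xs"] by simp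

lemma reval_Pj1: "reval (Pj 1) (x # y # xs) y"
  using reval.proj[of 1 "x # y # xs"] by simp

lemma reval_Pj2: "reval (Pj 2) (x # y # z # xs) z"
  using reval.proj[of 2 "x # y # z # xs"] by simp

lemma reval_Pr:
  assumes "\<And>x. reval cf [x] (f x)" and "\<And>k r x. reval cg [k, r, x] (g k r x)"
  shows "reval (Pr cf cg) [n, x] (rec_nat (f x) (\<lambda>k r. g k r x) n)"
proof (induction n)
  case 0
  then show ?case using assms(1) by (simp add: reval.prec0)
next
  case (Suc n)
  then show ?case using assms(2) by (auto intro: reval.precS)
qed

lemma reval_Mn_Least:
  assumes "\<And>n x. reval c [n, x] (F n x)" and "\<exists>n. F n x = 0"
  shows "reval (Mn c) [x] (LEAST n. F n x = 0)"
proof (rule reval.mu)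
  show "reval c [LEAST n. F n x = 0, x] 0"
    using assms LeastI_ex[OF assms(2)] by metis
  show "\<forall>m<(LEAST n. F n x = 0). \<exists>v. reval c [m, x] (Suc v)"
  proof (intro allI impI)
    fix m assume "m < (LEAST n. F n x = 0)"
    then have "F m x \<noteq> 0" using not_less_Least by blast
    then obtain v where "F m x = Suc v" using not0_implies_Suc by blast
    then show "\<exists>v. reval c [m, x] (Suc v)" using assms(1) by metis
  qed
qed

fun const_code :: "nat \<Rightarrow> recf" where
  "const_code 0 = Zr"
| "const_code (Suc k) = Cn Sc [const_code k]"

lemma reval_const_code: "reval (const_code k) xs k"
  by (induction k) (auto intro: reval.zero reval_Cn1 reval.succ)

lemma recursive1_const [intro]: "recursive1 (\<lambda>x. k)"
  unfolding recursive1_def using reval_const_code by blast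

lemma recursive1_ident [intro]: "recursive1 (\<lambda>x. x)"
  unfolding recursive1_def using reval_Pj0 by blast

lemma recursive1_comp: "recursive1 f \<Longrightarrow> recursive1 g \<Longrightarrow> recursive1 (\<lambda>x. f (g x))"
  unfolding recursive1_def by (blast intro: reval_Cn1)

lemma recursive1_comp2:
  "recursive2 F \<Longrightarrow> recursive1 a \<Longrightarrow> recursive1 b \<Longrightarrow> recursive1 (\<lambda>x. F (a x) (b x))"
  unfolding recursive1_def recursive2_def by (blast intro: reval_Cn2)

lemma recursive2_comp:
  assumes "recursive1 f" and "recursive2 a"
  shows "recursive2 (\<lambda>n x. f (a n x))"
proof -
  obtain cf ca where "\<And>x. reval cf [x] (f x)" and "\<And>n x. reval ca [n, x] (a n x)"
    using assms unfolding recursive1_def recursive2_def by blast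
  then have "reval (Cn cf [ca]) [n, x] (f (a n x))" for n x by (blast intro: reval_Cn1)
  then show ?thesis unfolding recursive2_def by blast
qed

lemma recursive2_comp2:
  assumes "recursive2 F" and "recursive2 a" and "recursive2 b"
  shows "recursive2 (\<lambda>n x. F (a n x) (b n x))"
proof -
  obtain cf ca cb where "\<And>n x. reval cf [n, x] (F n x)" and "\<And>n x. reval ca [n, x] (a n x)"
    and "\<And>n x. reval cb [n, x] (b n x)"
    using assms unfolding recursive2_def by blast
  then have "reval (Cn cf [ca, cb]) [n, x] (F (a n x) (b n x))" for n x by (blast intro: reval_Cn2)
  then show ?thesis unfolding recursive2_def by blast
qed

lemma recursive2_fst [intro]: "recursive2 (\<lambda>n x. n)"
  unfolding recursive2_def using reval_Pj0 by blast

lemma recursive2_snd [intro]: "recursive2 (\<lambda>n x. x)"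
  unfolding recursive2_def using reval_Pj1 by blast

lemma recursive1_Least:
  assumes "recursive2 F" and "\<And>x. \<exists>n. F n x = 0"
  shows "recursive1 (\<lambda>x. LEAST n. F n x = 0)"
proof -
  obtain c where "\<And>n x. reval c [n, x] (F n x)" using assms(1) unfolding recursive2_def by blast
  then show ?thesis unfolding recursive1_def using reval_Mn_Least assms(2) by blast
qed

lemma recursive1_Suc [intro]: "recursive1 a \<Longrightarrow> recursive1 (\<lambda>x. Suc (a x))"
proof -
  have "recursive1 Suc" unfolding recursive1_def by (blast intro: reval.succ)
  then show "recursive1 a \<Longrightarrow> recursive1 (\<lambda>x. Suc (a x))" using recursive1_comp[of Suc a] by simp
qed

lemma recursive2_Suc [intro]: "recursive2 a \<Longrightarrow> recursive2 (\<lambda>n x. Suc (a n x))"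
  using recursive2_comp[of Suc a] recursive1_Suc[OF recursive1_ident] by simp

lemma recursive2_plus: "recursive2 (+)"
proof -
  have "reval (Pr (Pj 0) (Cn Sc [Pj 1])) [n, x] (n + x)" for n x
  proof -
    have "reval (Pr (Pj 0) (Cn Sc [Pj 1])) [n, x] (rec_nat x (\<lambda>k r. Suc r) n)"
      by (rule reval_Pr; (rule reval_Pj0 reval_Cn1 reval_Pj1 reval.succ)+)
    moreover have "rec_nat x (\<lambda>k r. Suc r) n = n + x" by (induction n) auto
    ultimately show ?thesis by simp
  qed
  then show ?thesis unfolding recursive2_def by blast
qed

lemma recursive2_times: "recursive2 (*)"
proof -
  obtain ca where ca: "\<And>u v. reval ca [u, v] (u + v)"
    using recursive2_plus unfolding recursive2_def by blast
  have "reval (Pr Zr (Cn ca [Pj 1, Pj 2])) [n, x] (n * x)" for n x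
  proof -
    have "reval (Pr Zr (Cn ca [Pj 1, Pj 2])) [n, x] (rec_nat 0 (\<lambda>k r. r + x) n)"
      by (rule reval_Pr; (rule reval.zero reval_Cn2 reval_Pj1 reval_Pj2 ca)+)
    moreover have "rec_nat 0 (\<lambda>k r. r + x) n = n * x" by (induction n) auto
    ultimately show ?thesis by simp
  qed
  then show ?thesis unfolding recursive2_def by blast
qed

lemma recursive2_minus: "recursive2 (-)"
proof -
  have pred: "reval (Pr Zr (Pj 0)) [n, x] (n - 1)" for n x
  proof -
    have "reval (Pr Zr (Pj 0)) [n, x] (rec_nat 0 (\<lambda>k r. k) n)"
      by (rule reval_Pr; (rule reval.zero reval_Pj0)+)
    moreover have "rec_nat 0 (\<lambda>k r. k) n = n - 1" by (cases n) auto
    ultimately show ?thesis by simp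
  qed
  have "reval (Cn (Pr (Pj 0) (Cn (Pr Zr (Pj 0)) [Pj 1, Pj 1])) [Pj 1, Pj 0]) [x, n] (x - n)" for n x
  proof -
    have "reval (Pr (Pj 0) (Cn (Pr Zr (Pj 0)) [Pj 1, Pj 1])) [n, x] (rec_nat x (\<lambda>k r. r - 1) n)"
      by (rule reval_Pr; (rule reval_Pj0 reval_Cn2 reval_Pj1 pred)+)
    moreover have "rec_nat x (\<lambda>k r. r - 1) n = x - n" by (induction n) auto
    ultimately show ?thesis by (metis reval_Cn2 reval_Pj1 reval_Pj0)
  qed
  then show ?thesis unfolding recursive2_def by blast
qed

lemma recursive1_add [intro]: "recursive1 a \<Longrightarrow> recursive1 b \<Longrightarrow> recursive1 (\<lambda>x. a x + b x)"
  using recursive1_comp2[OF recursive2_plus] .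

lemma recursive1_mult [intro]: "recursive1 a \<Longrightarrow> recursive1 b \<Longrightarrow> recursive1 (\<lambda>x. a x * b x)"
  using recursive1_comp2[OF recursive2_times] .

lemma recursive1_diff [intro]: "recursive1 a \<Longrightarrow> recursive1 b \<Longrightarrow> recursive1 (\<lambda>x. a x - b x)"
  using recursive1_comp2[OF recursive2_minus] .

lemma recursive2_add [intro]: "recursive2 a \<Longrightarrow> recursive2 b \<Longrightarrow> recursive2 (\<lambda>n x. a n x + b n x)"
  using recursive2_comp2[OF recursive2_plus] .

lemma recursive2_diff [intro]: "recursive2 a \<Longrightarrow> recursive2 b \<Longrightarrow> recursive2 (\<lambda>n x. a n x - b n x)"
  using recursive2_comp2[OF recursive2_minus] .

lemma recursive1_triangle [intro]: "recursive1 a \<Longrightarrow> recursive1 (\<lambda>x. triangle (a x))"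
proof -
  obtain ca where ca: "\<And>u v. reval ca [u, v] (u + v)"
    using recursive2_plus unfolding recursive2_def by blast
  have "reval (Pr Zr (Cn ca [Pj 1, Cn Sc [Pj 0]])) [n, x] (triangle n)" for n x
  proof -
    have "reval (Pr Zr (Cn ca [Pj 1, Cn Sc [Pj 0]])) [n, x] (rec_nat 0 (\<lambda>k r. r + Suc k) n)"
      by (rule reval_Pr; (rule reval.zero reval_Cn2 reval_Cn1 reval_Pj0 reval_Pj1 reval.succ ca)+)
    moreover have "rec_nat 0 (\<lambda>k r. r + Suc k) n = triangle n" by (induction n) auto
    ultimately show ?thesis by simp
  qed
  then have "recursive2 (\<lambda>n x. triangle n)" unfolding recursive2_def by blast
  from recursive1_comp2[OF this] show "recursive1 a \<Longrightarrow> recursive1 (\<lambda>x. triangle (a x))" by blast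
qed

lemma recursive2_triangle [intro]: "recursive2 a \<Longrightarrow> recursive2 (\<lambda>n x. triangle (a n x))"
  using recursive2_comp[OF recursive1_triangle[OF recursive1_ident]] .

lemma recursive2_prod_encode: "recursive2 (\<lambda>a b. prod_encode (a, b))"
  using recursive2_add[OF recursive2_triangle[OF recursive2_add[OF recursive2_fst recursive2_snd]]
      recursive2_fst]
  by (simp add: prod_encode_def)

lemma recursive1_prod_encode [intro]:
  "recursive1 a \<Longrightarrow> recursive1 b \<Longrightarrow> recursive1 (\<lambda>x. prod_encode (a x, b x))"
  using recursive1_comp2[OF recursive2_prod_encode] .

lemma recursive1_if_zero [intro]:
  assumes "recursive1 t" "recursive1 a" "recursive1 b"
  shows "recursive1 (\<lambda>x. if t x = 0 then a x else b x)"
proof -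
  have "(\<lambda>x. if t x = 0 then a x else b x) = (\<lambda>x. a x * (1 - t x) + b x * (1 - (1 - t x)))"
    by auto
  moreover have "recursive1 (\<lambda>x. a x * (1 - t x) + b x * (1 - (1 - t x)))"
    using assms by (intro recursive1_add recursive1_mult recursive1_diff recursive1_const)
  ultimately show ?thesis by simp
qed

lemma recursive1_if_le [intro]:
  assumes "recursive1 u" "recursive1 v" "recursive1 a" "recursive1 b"
  shows "recursive1 (\<lambda>x. if u x \<le> v x then a x else b x)"
proof -
  have "recursive1 (\<lambda>x. if u x - v x = 0 then a x else b x)"
    using assms by (intro recursive1_if_zero recursive1_diff)
  then show ?thesis by simp
qed

lemma recursive1_if_eq [intro]:
  assumes "recursive1 u" "recursive1 v" "recursive1 a" "recursive1 b"
  shows "recursive1 (\<lambda>x. if u x = v x then a x else b x)"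
proof -
  have "recursive1 (\<lambda>x. if (u x - v x) + (v x - u x) = 0 then a x else b x)"
    using assms by (intro recursive1_if_zero recursive1_diff recursive1_add)
  moreover have "(\<lambda>x. if (u x - v x) + (v x - u x) = 0 then a x else b x)
      = (\<lambda>x. if u x = v x then a x else b x)"
    by auto
  ultimately show ?thesis by metis
qed

lemma recursive1_indicator_finite:
  assumes "finite F"
  shows "recursive1 (\<lambda>v. if v \<in> F then 0 else (1 :: nat))"
  using assms
proof (induction F rule: finite_induct)
  case (insert a F)
  then have "recursive1 (\<lambda>v. if v = a then 0 else (if v \<in> F then 0 else (1 :: nat)))"
    by (intro recursive1_if_eq recursive1_ident recursive1_const)
  moreover have "(\<lambda>v. if v = a then 0 else (if v \<in> F then 0 else (1 :: nat)))
      = (\<lambda>v. if v \<in> insert a F then 0 else 1)"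
    by auto
  ultimately show ?case by simp
qed (simp add: recursive1_const)

definition triangle_root :: "nat \<Rightarrow> nat" where
  "triangle_root x = (LEAST k. Suc x - triangle (Suc k) = 0)"

lemma triangle_root_exists: "\<exists>k. Suc x - triangle (Suc k) = 0"
proof -
  have "k \<le> triangle k" for k by (induction k) auto
  from this[of "Suc x"] show ?thesis by (intro exI[of _ x]) auto
qed

lemma triangle_root_bounds: "triangle (triangle_root x) \<le> x" "x < triangle (Suc (triangle_root x))"
proof -
  show "x < triangle (Suc (triangle_root x))"
    using LeastI_ex[OF triangle_root_exists[of x]] unfolding triangle_root_def by auto
  show "triangle (triangle_root x) \<le> x"
  proof (cases "triangle_root x")
    case (Suc k)
    then have "k < triangle_root x" by simp
    then have "Suc x - triangle (Suc k) \<noteq> 0" unfolding triangle_root_def by (rule not_less_Least)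
    then show ?thesis using Suc by simp
  qed simp
qed

lemma prod_decode_triangle_root:
  "prod_decode x =
     (x - triangle (triangle_root x), triangle_root x - (x - triangle (triangle_root x)))"
proof -
  let ?k = "triangle_root x" let ?m = "x - triangle ?k"
  have "?m \<le> ?k" using triangle_root_bounds[of x] by simp
  then have "prod_encode (?m, ?k - ?m) = x"
    using triangle_root_bounds(1)[of x] by (simp add: prod_encode_def)
  from arg_cong[OF this, of prod_decode] show ?thesis by simp
qed

lemma recursive1_triangle_root: "recursive1 triangle_root"
  unfolding triangle_root_def[abs_def]
  by (rule recursive1_Least[OF _ triangle_root_exists])
    (intro recursive2_diff recursive2_Suc recursive2_snd recursive2_triangle recursive2_fst)

definition decode_fst :: "nat \<Rightarrow> nat" where "decode_fst x = fst (prod_decode x)"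
definition decode_snd :: "nat \<Rightarrow> nat" where "decode_snd x = snd (prod_decode x)"

lemma decode_fst_prod_encode [simp]: "decode_fst (prod_encode (a, b)) = a"
  by (simp add: decode_fst_def)

lemma decode_snd_prod_encode [simp]: "decode_snd (prod_encode (a, b)) = b"
  by (simp add: decode_snd_def)

lemma recursive1_decode_fst [intro]: "recursive1 a \<Longrightarrow> recursive1 (\<lambda>x. decode_fst (a x))"
proof -
  have "decode_fst = (\<lambda>x. x - triangle (triangle_root x))"
    by (rule ext) (simp add: decode_fst_def prod_decode_triangle_root)
  moreover have "recursive1 (\<lambda>x. x - triangle (triangle_root x))"
    using recursive1_triangle_root by (intro recursive1_diff recursive1_ident recursive1_triangle)
  ultimately show "recursive1 a \<Longrightarrow> recursive1 (\<lambda>x. decode_fst (a x))"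
    using recursive1_comp[of decode_fst a] by simp
qed

lemma recursive1_decode_snd [intro]: "recursive1 a \<Longrightarrow> recursive1 (\<lambda>x. decode_snd (a x))"
proof -
  have "decode_snd = (\<lambda>x. triangle_root x - (x - triangle (triangle_root x)))"
    by (rule ext) (simp add: decode_snd_def prod_decode_triangle_root)
  moreover have "recursive1 (\<lambda>x. triangle_root x - (x - triangle (triangle_root x)))"
    using recursive1_triangle_root by (intro recursive1_diff recursive1_ident recursive1_triangle)
  ultimately show "recursive1 a \<Longrightarrow> recursive1 (\<lambda>x. decode_snd (a x))"
    using recursive1_comp[of decode_snd a] by simp
qed

lemma recursive2_rec_nat:
  assumes "recursive1 f"
    and "recursive1 (\<lambda>y. g (decode_fst y) (decode_fst (decode_snd y)) (decode_snd (decode_snd y)))"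
  shows "recursive2 (\<lambda>n x. rec_nat (f x) (\<lambda>k r. g k r x) n)"
proof -
  define G where
    "G y = g (decode_fst y) (decode_fst (decode_snd y)) (decode_snd (decode_snd y))" for y
  obtain cf where cf: "\<And>x. reval cf [x] (f x)"
    using assms(1) unfolding recursive1_def by blast
  obtain cg where cg: "\<And>y. reval cg [y] (G y)"
    using assms(2) unfolding recursive1_def G_def by blast
  obtain cp where cp: "\<And>u v. reval cp [u, v] (prod_encode (u, v))"
    using recursive2_prod_encode unfolding recursive2_def by blast
  have "reval (Cn cg [Cn cp [Pj 0, Cn cp [Pj 1, Pj 2]]]) [k, r, x]
      (G (prod_encode (k, prod_encode (r, x))))" for k r x
    by (rule reval_Cn1 reval_Cn2 reval_Pj0 reval_Pj1 reval_Pj2 cp cg)+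
  then have "reval (Pr cf (Cn cg [Cn cp [Pj 0, Cn cp [Pj 1, Pj 2]]])) [n, x]
      (rec_nat (f x) (\<lambda>k r. g k r x) n)" for n x
    using reval_Pr[OF cf] by (simp add: G_def)
  then show ?thesis unfolding recursive2_def by blast
qed

lemma recursive1_rec_nat:
  assumes "recursive1 f"
    and "recursive1 (\<lambda>y. g (decode_fst y) (decode_fst (decode_snd y)) (decode_snd (decode_snd y)))"
    and "recursive1 a"
  shows "recursive1 (\<lambda>x. rec_nat (f x) (\<lambda>k r. g k r x) (a x))"
  using recursive1_comp2[OF recursive2_rec_nat[OF assms(1,2)] assms(3) recursive1_ident] .

section \<open>Computing with codes of situations\<close>

definition code_hd :: "nat \<Rightarrow> nat" where "code_hd c = decode_fst (c - 1)"
definition code_tl :: "nat \<Rightarrow> nat" where "code_tl c = decode_snd (c - 1)"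
definition code_drop :: "nat \<Rightarrow> nat \<Rightarrow> nat" where "code_drop n c = rec_nat c (\<lambda>k r. code_tl r) n"
definition code_length :: "nat \<Rightarrow> nat" where "code_length c = (LEAST n. code_drop n c = 0)"
definition code_nth :: "nat \<Rightarrow> nat \<Rightarrow> nat" where "code_nth c k = code_hd (code_drop k c)"

definition code_rev_step :: "nat \<Rightarrow> nat" where
  "code_rev_step r =
     prod_encode (code_tl (decode_fst r), Suc (prod_encode (code_hd (decode_fst r), decode_snd r)))"

definition code_rev :: "nat \<Rightarrow> nat" where
  "code_rev c = decode_snd (rec_nat (prod_encode (c, 0)) (\<lambda>k r. code_rev_step r) (code_length c))"

definition code_take :: "nat \<Rightarrow> nat \<Rightarrow> nat" where
  "code_take k c = code_rev (code_drop (code_length c - k) (code_rev c))"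

lemma recursive1_code_hd [intro]: "recursive1 a \<Longrightarrow> recursive1 (\<lambda>x. code_hd (a x))"
  unfolding code_hd_def by (intro recursive1_decode_fst recursive1_diff recursive1_const)

lemma recursive1_code_tl [intro]: "recursive1 a \<Longrightarrow> recursive1 (\<lambda>x. code_tl (a x))"
  unfolding code_tl_def by (intro recursive1_decode_snd recursive1_diff recursive1_const)

lemma recursive2_code_drop: "recursive2 code_drop"
proof -
  have "recursive2 (\<lambda>n x. rec_nat x (\<lambda>k r. (\<lambda>k r x. code_tl r) k r x) n)"
    by (rule recursive2_rec_nat)
      (intro recursive1_code_tl recursive1_decode_fst recursive1_decode_snd
        recursive1_ident)+
  then show ?thesis unfolding code_drop_def[abs_def] by simp
qed

lemma recursive1_code_drop [intro]:
  "recursive1 a \<Longrightarrow> recursive1 b \<Longrightarrow> recursive1 (\<lambda>x. code_drop (a x) (b x))"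
  using recursive1_comp2[OF recursive2_code_drop] .

lemma recursive1_code_rev_step [intro]: "recursive1 a \<Longrightarrow> recursive1 (\<lambda>x. code_rev_step (a x))"
  unfolding code_rev_step_def
  by (intro recursive1_prod_encode recursive1_code_tl recursive1_decode_fst recursive1_Suc
      recursive1_code_hd recursive1_decode_snd)

lemma enc_sit_Nil [simp]: "enc_sit [] = 0"
  by (simp add: enc_sit_def)

lemma enc_sit_Cons [simp]: "enc_sit (b # s) = Suc (prod_encode (of_bool b, enc_sit s))"
  by (simp add: enc_sit_def)

lemma enc_sit_eq_iff [simp]: "enc_sit s = enc_sit t \<longleftrightarrow> s = t"
proof
  assume "enc_sit s = enc_sit t"
  then have "map of_bool s = (map of_bool t :: nat list)" by (simp add: enc_sit_def list_encode_eq)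
  moreover have "inj (of_bool :: bool \<Rightarrow> nat)" by (auto simp: inj_def)
  ultimately show "s = t" by (simp add: inj_map_eq_map)
qed simp

lemma code_hd_Suc_prod_encode [simp]: "code_hd (Suc (prod_encode (a, b))) = a"
  by (simp add: code_hd_def)

lemma code_tl_Suc_prod_encode [simp]: "code_tl (Suc (prod_encode (a, b))) = b"
  by (simp add: code_tl_def)

lemma code_tl_enc_sit [simp]: "code_tl (enc_sit s) = enc_sit (tl s)"
proof (cases s)
  case Nil
  have "prod_encode (0, 0) = 0" by (simp add: prod_encode_def)
  then show ?thesis using Nil decode_snd_prod_encode[of 0 0] by (simp add: code_tl_def)
qed simp

lemma code_drop_enc_sit [simp]: "code_drop n (enc_sit s) = enc_sit (drop n s)"
  by (induction n) (auto simp: code_drop_def drop_Suc tl_drop)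

lemma code_length_enc_sit [simp]: "code_length (enc_sit s) = length s"
proof -
  have "code_drop n (enc_sit s) = 0 \<longleftrightarrow> length s \<le> n" for n
    using enc_sit_eq_iff[of "drop n s" "[]"] by simp
  then show ?thesis unfolding code_length_def by (auto intro!: Least_equality)
qed

lemma recursive1_code_length [intro]: "recursive1 a \<Longrightarrow> recursive1 (\<lambda>x. code_length (a x))"
proof -
  have drop_Suc: "code_drop (Suc n) c = code_drop n (code_tl c)" for n c
    by (induction n) (auto simp: code_drop_def)
  have "\<exists>n. code_drop n (list_encode xs) = 0" for xs
  proof (induction xs)
    case Nil
    then show ?case by (auto intro!: exI[of _ 0] simp: code_drop_def)
  next
    case (Cons y ys)
    moreover have "code_tl (list_encode (y # ys)) = list_encode ys" by (simp add: code_tl_def)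
    ultimately show ?case using drop_Suc by metis
  qed
  then have "\<exists>n. code_drop n c = 0" for c by (metis list_decode_inverse)
  then have "recursive1 code_length"
    unfolding code_length_def[abs_def] by (intro recursive1_Least recursive2_code_drop)
  then show "recursive1 a \<Longrightarrow> recursive1 (\<lambda>x. code_length (a x))" using recursive1_comp by blast
qed

lemma code_nth_enc_sit [simp]: "k < length s \<Longrightarrow> code_nth (enc_sit s) k = of_bool (s ! k)"
  by (simp add: code_nth_def Cons_nth_drop_Suc[symmetric])

lemma recursive1_code_nth [intro]:
  "recursive1 a \<Longrightarrow> recursive1 b \<Longrightarrow> recursive1 (\<lambda>x. code_nth (a x) (b x))"
  unfolding code_nth_def by (intro recursive1_code_hd recursive1_code_drop)

lemma code_rev_enc_sit [simp]: "code_rev (enc_sit s) = enc_sit (rev s)"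
proof -
  have "j \<le> length s \<Longrightarrow> rec_nat (prod_encode (enc_sit s, 0)) (\<lambda>k r. code_rev_step r) j
      = prod_encode (enc_sit (drop j s), enc_sit (rev (take j s)))" for j
  proof (induction j)
    case (Suc j)
    then have "j < length s" by simp
    then have "drop j s = s ! j # drop (Suc j) s" and "take (Suc j) s = take j s @ [s ! j]"
      by (simp_all add: Cons_nth_drop_Suc take_Suc_conv_app_nth)
    then show ?case using Suc by (simp add: code_rev_step_def)
  qed simp
  from this[of "length s"] show ?thesis unfolding code_rev_def by simp
qed

lemma recursive1_code_rev [intro]: "recursive1 a \<Longrightarrow> recursive1 (\<lambda>x. code_rev (a x))"
proof -
  have "recursive1 (\<lambda>c. rec_nat (prod_encode (c, 0)) (\<lambda>k r. (\<lambda>k r c. code_rev_step r) k r c)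
      (code_length c))"
    by (rule recursive1_rec_nat)
      (intro recursive1_code_rev_step recursive1_decode_fst recursive1_decode_snd
        recursive1_prod_encode
        recursive1_ident recursive1_code_length recursive1_const)+
  then have "recursive1 code_rev" unfolding code_rev_def[abs_def] by (intro recursive1_decode_snd)
  then show "recursive1 a \<Longrightarrow> recursive1 (\<lambda>x. code_rev (a x))" using recursive1_comp by blast
qed

lemma code_take_enc_sit [simp]: "k \<le> length s \<Longrightarrow> code_take k (enc_sit s) = enc_sit (take k s)"
  by (simp add: code_take_def rev_drop)

lemma recursive1_code_take [intro]:
  "recursive1 a \<Longrightarrow> recursive1 b \<Longrightarrow> recursive1 (\<lambda>x. code_take (a x) (b x))"
  unfolding code_take_def
  by (intro recursive1_code_rev recursive1_code_drop recursive1_diff recursive1_code_length)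

section \<open>Rational approximations\<close>

lemma recursive1_div2 [intro]: "recursive1 a \<Longrightarrow> recursive1 (\<lambda>x. a x div 2)"
proof -
  have "(LEAST m. Suc x - Suc (Suc (m + m)) = 0) = x div 2" for x
    by (rule Least_equality) auto
  moreover have "recursive1 (\<lambda>x. LEAST m. Suc x - Suc (Suc (m + m)) = 0)"
    by (rule recursive1_Least)
      (intro recursive2_diff recursive2_Suc recursive2_snd recursive2_add recursive2_fst,
        presburger)
  ultimately have "recursive1 (\<lambda>x. x div 2)" by simp
  then show "recursive1 a \<Longrightarrow> recursive1 (\<lambda>x. a x div 2)" using recursive1_comp by blast
qed

lemma rat_code_decode:
  "rat_code v = real_of_int (int_decode (decode_fst v)) / real (Suc (decode_snd v))"
  by (simp add: rat_code_def decode_fst_def decode_snd_def split: prod.split)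

lemma int_decode_if: "int_decode a = (if even a then int (a div 2) else - int (a div 2) - 1)"
  by (simp add: int_decode_def sum_decode_def)

lemma rat_code_even:
  "even (decode_fst v) \<Longrightarrow> rat_code v = real (decode_fst v div 2) / real (Suc (decode_snd v))"
  by (simp add: rat_code_decode int_decode_if)

lemma rat_code_odd: "odd (decode_fst v) \<Longrightarrow> rat_code v < 0"
  by (simp add: rat_code_decode int_decode_if divide_neg_pos)

lemma of_nat_divide_le_divide_iff:
  assumes "0 < q" and "0 < q'"
  shows "real p / real q \<le> real p' / real q' \<longleftrightarrow> p * q' \<le> p' * q"
proof -
  have "real p / real q \<le> real p' / real q' \<longleftrightarrow> real p * real q' \<le> real p' * real q"
    using assms by (simp add: field_simps)
  then show ?thesis by (simp only: of_nat_mult[symmetric] of_nat_le_iff)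
qed

definition rat_code_ge_test :: "nat \<Rightarrow> nat \<Rightarrow> nat \<Rightarrow> nat" where
  "rat_code_ge_test P Q v =
     (if decode_fst v \<le> 2 * (decode_fst v div 2)
      then (if P * Suc (decode_snd v) \<le> decode_fst v div 2 * Q then 0 else 1) else 1)"

definition rat_code_le_test :: "nat \<Rightarrow> nat \<Rightarrow> nat \<Rightarrow> nat" where
  "rat_code_le_test P Q v =
     (if decode_fst v \<le> 2 * (decode_fst v div 2)
      then (if decode_fst v div 2 * Q \<le> P * Suc (decode_snd v) then 0 else 1) else 0)"

lemma recursive1_rat_code_ge_test: "recursive1 (rat_code_ge_test P Q)"
  unfolding rat_code_ge_test_def[abs_def]
  by (intro recursive1_if_le recursive1_decode_fst recursive1_decode_snd recursive1_mult recursive1_div2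
      recursive1_Suc recursive1_const recursive1_ident)

lemma recursive1_rat_code_le_test: "recursive1 (rat_code_le_test P Q)"
  unfolding rat_code_le_test_def[abs_def]
  by (intro recursive1_if_le recursive1_decode_fst recursive1_decode_snd recursive1_mult recursive1_div2
      recursive1_Suc recursive1_const recursive1_ident)

lemma even_iff_le_double_half: "even (a :: nat) \<longleftrightarrow> a \<le> 2 * (a div 2)"
  by presburger

lemma rat_code_ge_test_iff:
  assumes "Q > 0"
  shows "rat_code_ge_test P Q v = 0 \<longleftrightarrow> real P / real Q \<le> rat_code v"
proof (cases "even (decode_fst v)")
  case True
  then have "real P / real Q \<le> rat_code v \<longleftrightarrow> P * Suc (decode_snd v) \<le> decode_fst v div 2 * Q"
    using assms by (simp only: rat_code_even of_nat_divide_le_divide_iff zero_less_Suc)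
  then show ?thesis using True by (simp add: rat_code_ge_test_def flip: even_iff_le_double_half)
next
  case False
  then have "\<not> decode_fst v \<le> 2 * (decode_fst v div 2)" by presburger
  moreover have "0 \<le> real P / real Q" by simp
  then have "\<not> real P / real Q \<le> rat_code v" using rat_code_odd[OF False] by linarith
  ultimately show ?thesis by (simp add: rat_code_ge_test_def)
qed

lemma rat_code_le_test_iff:
  assumes "Q > 0"
  shows "rat_code_le_test P Q v = 0 \<longleftrightarrow> rat_code v \<le> real P / real Q"
proof (cases "even (decode_fst v)")
  case True
  then have "rat_code v \<le> real P / real Q \<longleftrightarrow> decode_fst v div 2 * Q \<le> P * Suc (decode_snd v)"
    using assms by (simp only: rat_code_even of_nat_divide_le_divide_iff zero_less_Suc)
  then show ?thesis using True by (simp add: rat_code_le_test_def flip: even_iff_le_double_half)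
next
  case False
  then have "\<not> decode_fst v \<le> 2 * (decode_fst v div 2)" by presburger
  moreover have "0 \<le> real P / real Q" by simp
  then have "rat_code v \<le> real P / real Q" using rat_code_odd[OF False] by linarith
  ultimately show ?thesis by (simp add: rat_code_le_test_def)
qed

definition code_one :: nat where "code_one = prod_encode (2, 0)"

lemma rat_code_one [simp]: "rat_code code_one = 1"
  by (simp add: code_one_def rat_code_def int_decode_def sum_decode_def)

definition code_divide :: "nat \<Rightarrow> nat \<Rightarrow> nat" where
  "code_divide M v = prod_encode (decode_fst v, M * decode_snd v + (M - 1))"

lemma rat_code_code_divide: "M > 0 \<Longrightarrow> rat_code (code_divide M v) = rat_code v / real M"
proof -
  assume "M > 0"
  then have "real (Suc (M * decode_snd v + (M - 1))) = real M * real (Suc (decode_snd v))"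
    by (cases M) (auto simp: algebra_simps)
  then show ?thesis
    by (simp add: rat_code_decode code_divide_def)
qed

lemma recursive1_code_divide [intro]: "recursive1 a \<Longrightarrow> recursive1 (\<lambda>x. code_divide M (a x))"
  unfolding code_divide_def
  by (intro recursive1_prod_encode recursive1_decode_fst recursive1_add recursive1_mult
      recursive1_decode_snd recursive1_const)

lemma nonneg_rat_between:
  fixes x y :: real
  assumes "0 \<le> x" and "x < y"
  obtains P Q :: nat where "Q > 0" and "x < real P / real Q" and "real P / real Q < y"
proof -
  obtain r where r: "r \<in> \<rat>" "x < r" "r < y" using Rats_dense_in_real[OF assms(2)] by blast
  then obtain i n where i: "r = real_of_int i / real n" "n \<noteq> 0"
    unfolding Rats_eq_int_div_nat by blast
  then have "i > 0" using r assms(1)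
    by (metis divide_nonpos_pos less_le_trans not_le of_int_le_0_iff of_nat_0_less_iff gr0I)
  then have "real (nat i) = real_of_int i" by simp
  then show ?thesis using i r that[of n "nat i"] by auto
qed

lemma computable_lower_bound_test:
  assumes "computable_on enc r" and "0 \<le> a" and "a < b"
  obtains t where "recursive1 t" and "\<And>d. t (enc d) = 0 \<Longrightarrow> a \<le> r d"
    and "\<And>d. b \<le> r d \<Longrightarrow> t (enc d) = 0"
proof -
  obtain q where q: "recursive1 q" "\<And>d n. \<bar>r d - rat_code (q (prod_encode (enc d, n)))\<bar> < (1/2) ^ n"
    using assms(1) unfolding computable_on_def by blast
  obtain K where K: "(1/2 :: real) ^ K < (b - a) / 3"
    using real_arch_pow_inv[of "(b - a) / 3" "1/2"] assms(3) by auto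
  define \<delta> where "\<delta> = (1/2 :: real) ^ K"
  have "0 < \<delta>" "3 * \<delta> < b - a" using K by (simp_all add: \<delta>_def)
  then have "0 \<le> a + \<delta>" "a + \<delta> < b - \<delta>" using assms(2) by linarith+
  then obtain P Q where PQ: "Q > 0" "a + \<delta> < real P / real Q" "real P / real Q < b - \<delta>"
    by (rule nonneg_rat_between)
  have approx: "\<bar>r d - rat_code (q (prod_encode (enc d, K)))\<bar> < \<delta>" for d
    using q(2) by (simp add: \<delta>_def)
  show ?thesis
  proof
    show "recursive1 (\<lambda>c. rat_code_ge_test P Q (q (prod_encode (c, K))))"
      by (intro recursive1_comp[OF recursive1_rat_code_ge_test] recursive1_comp[OF q(1)]
          recursive1_prod_encode recursive1_ident recursive1_const)
    show "a \<le> r d" if "rat_code_ge_test P Q (q (prod_encode (enc d, K))) = 0" for d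
      using that approx[of d] PQ by (simp add: rat_code_ge_test_iff)
    show "rat_code_ge_test P Q (q (prod_encode (enc d, K))) = 0" if "b \<le> r d" for d
      using that approx[of d] PQ by (simp add: rat_code_ge_test_iff)
  qed
qed

lemma computable_upper_bound_test:
  assumes "computable_on enc r" and "0 \<le> a" and "a < b"
  obtains t where "recursive1 t" and "\<And>d. t (enc d) = 0 \<Longrightarrow> r d \<le> b"
    and "\<And>d. r d \<le> a \<Longrightarrow> t (enc d) = 0"
proof -
  obtain q where q: "recursive1 q" "\<And>d n. \<bar>r d - rat_code (q (prod_encode (enc d, n)))\<bar> < (1/2) ^ n"
    using assms(1) unfolding computable_on_def by blast
  obtain K where K: "(1/2 :: real) ^ K < (b - a) / 3"
    using real_arch_pow_inv[of "(b - a) / 3" "1/2"] assms(3) by auto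
  define \<delta> where "\<delta> = (1/2 :: real) ^ K"
  have "0 < \<delta>" "3 * \<delta> < b - a" using K by (simp_all add: \<delta>_def)
  then have "0 \<le> a + \<delta>" "a + \<delta> < b - \<delta>" using assms(2) by linarith+
  then obtain P Q where PQ: "Q > 0" "a + \<delta> < real P / real Q" "real P / real Q < b - \<delta>"
    by (rule nonneg_rat_between)
  have approx: "\<bar>r d - rat_code (q (prod_encode (enc d, K)))\<bar> < \<delta>" for d
    using q(2) by (simp add: \<delta>_def)
  show ?thesis
  proof
    show "recursive1 (\<lambda>c. rat_code_le_test P Q (q (prod_encode (c, K))))"
      by (intro recursive1_comp[OF recursive1_rat_code_le_test] recursive1_comp[OF q(1)]
          recursive1_prod_encode recursive1_ident recursive1_const)
    show "r d \<le> b" if "rat_code_le_test P Q (q (prod_encode (enc d, K))) = 0" for d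
      using that approx[of d] PQ by (simp add: rat_code_le_test_iff)
    show "rat_code_le_test P Q (q (prod_encode (enc d, K))) = 0" if "r d \<le> a" for d
      using that approx[of d] PQ by (simp add: rat_code_le_test_iff)
  qed
qed

definition kept_outcomes :: "(bool list \<Rightarrow> bool) \<Rightarrow> bool list \<Rightarrow> bool list" where
  "kept_outcomes P s = map (nth s) (filter (\<lambda>k. P (take k s)) [0..<length s])"

lemma kept_outcomes_snoc:
  "kept_outcomes P (s @ [x]) = kept_outcomes P s @ (if P s then [x] else [])"
proof -
  have "filter (\<lambda>k. P (take k (s @ [x]))) [0..<length s] = filter (\<lambda>k. P (take k s)) [0..<length s]"
    by (rule filter_cong) auto
  moreover have "map (nth (s @ [x])) (filter (\<lambda>k. P (take k s)) [0..<length s])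
      = map (nth s) (filter (\<lambda>k. P (take k s)) [0..<length s])"
    by (auto simp: nth_append)
  ultimately show ?thesis by (simp add: kept_outcomes_def)
qed

lemma kept_outcomes_ident: "(\<And>k. k < length s \<Longrightarrow> P (take k s)) \<Longrightarrow> kept_outcomes P s = s"
  unfolding kept_outcomes_def by (subst filter_True) (auto simp: map_nth)

text \<open>The code is built back to front: step \<open>j\<close> prepends the outcome with index
  \<open>length s - 1 - j\<close>.\<close>

definition kept_outcomes_step :: "(nat \<Rightarrow> nat) \<Rightarrow> nat \<Rightarrow> nat \<Rightarrow> nat \<Rightarrow> nat" where
  "kept_outcomes_step g j r c =
     (if g (code_take (code_length c - 1 - j) c) = 0
      then Suc (prod_encode (code_nth c (code_length c - 1 - j), r)) else r)"

definition kept_outcomes_code :: "(nat \<Rightarrow> nat) \<Rightarrow> nat \<Rightarrow> nat" where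
  "kept_outcomes_code g c = rec_nat 0 (\<lambda>j r. kept_outcomes_step g j r c) (code_length c)"

lemma recursive1_kept_outcomes_code:
  assumes "recursive1 g"
  shows "recursive1 (kept_outcomes_code g)"
proof -
  have "recursive1 (\<lambda>c. rec_nat 0 (\<lambda>j r. kept_outcomes_step g j r c) (code_length c))"
  proof (rule recursive1_rec_nat)
    show "recursive1 (\<lambda>y. kept_outcomes_step g (decode_fst y) (decode_fst (decode_snd y))
      (decode_snd (decode_snd y)))"
      unfolding kept_outcomes_step_def
      by (intro recursive1_if_zero recursive1_comp[OF assms] recursive1_code_take recursive1_Suc
          recursive1_prod_encode recursive1_code_nth recursive1_diff recursive1_code_length
          recursive1_decode_fst recursive1_decode_snd recursive1_ident recursive1_const)
  qed (intro recursive1_const recursive1_code_length recursive1_ident)+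
  then show ?thesis unfolding kept_outcomes_code_def[abs_def] by simp
qed

lemma kept_outcomes_code_enc_sit:
  "kept_outcomes_code g (enc_sit s) = enc_sit (kept_outcomes (\<lambda>p. g (enc_sit p) = 0) s)"
proof -
  let ?P = "\<lambda>p. g (enc_sit p) = 0"
  let ?L = "length s"
  have "j \<le> ?L \<Longrightarrow> rec_nat 0 (\<lambda>j r. kept_outcomes_step g j r (enc_sit s)) j
     = enc_sit (map (nth s) (filter (\<lambda>k. ?P (take k s)) [?L - j..<?L]))" for j
  proof (induction j)
    case (Suc j)
    then have "?L - 1 - j < ?L" and "[?L - Suc j..<?L] = (?L - 1 - j) # [?L - j..<?L]"
      by (simp_all add: Suc_diff_Suc upt_conv_Cons)
    then show ?case using Suc by (simp add: kept_outcomes_step_def del: upt_Suc)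
  qed simp
  from this[of ?L] show ?thesis by (simp add: kept_outcomes_code_def kept_outcomes_def)
qed

lemma forecasting_system_bounds:
  assumes "forecasting_system \<phi>"
  shows "\<phi> s = {lowerF \<phi> s .. upperF \<phi> s}" and "0 \<le> lowerF \<phi> s"
    and "lowerF \<phi> s \<le> upperF \<phi> s" and "upperF \<phi> s \<le> 1"
proof -
  obtain a b where ab: "0 \<le> a" "a \<le> b" "b \<le> 1" "\<phi> s = {a..b}"
    using assms unfolding forecasting_system_def by blast
  then have "lowerF \<phi> s = a" "upperF \<phi> s = b" by (simp_all add: lowerF_def upperF_def)
  with ab show "\<phi> s = {lowerF \<phi> s .. upperF \<phi> s}" "0 \<le> lowerF \<phi> s"
    "lowerF \<phi> s \<le> upperF \<phi> s" "upperF \<phi> s \<le> 1" by auto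
qed

lemma upperE_nonpos_iff:
  assumes "I \<noteq> {}" and "I \<subseteq> {0..1}"
  shows "upperE I g \<le> 0 \<longleftrightarrow> (\<forall>p\<in>I. p * g True + (1 - p) * g False \<le> 0)"
proof -
  have weight_le_abs: "q * z \<le> \<bar>z\<bar>" if "0 \<le> q" "q \<le> 1" for q z :: real
    using mult_left_mono[OF abs_ge_self[of z] that(1)]
      mult_left_le_one_le[OF abs_ge_zero[of z] that]
    by linarith
  have "p * g True + (1 - p) * g False \<le> \<bar>g True\<bar> + \<bar>g False\<bar>" if "p \<in> I" for p
    using weight_le_abs[of p "g True"] weight_le_abs[of "1 - p" "g False"] that assms(2) by force
  then have "bdd_above ((\<lambda>p. p * g True + (1 - p) * g False) ` I)" by (rule bdd_aboveI2)
  then show ?thesis unfolding upperE_def using assms(1) by (simp add: cSup_le_iff)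
qed

lemma supermartingale_iff:
  assumes "\<And>s. \<phi> s \<noteq> {}" and "\<And>s. \<phi> s \<subseteq> {0..1}"
  shows "supermartingale \<phi> F \<longleftrightarrow>
    (\<forall>s. \<forall>p\<in>\<phi> s. p * (F (s @ [True]) - F s) + (1 - p) * (F (s @ [False]) - F s) \<le> 0)"
  unfolding supermartingale_def using upperE_nonpos_iff[OF assms] by simp

lemma forecasting_system_in_unit_interval:
  "forecasting_system \<phi> \<Longrightarrow> p \<in> \<phi> s \<Longrightarrow> 0 \<le> p \<and> p \<le> 1"
  using forecasting_system_bounds[of \<phi> s] by auto

lemma supermartingale_iff_forecasting_system:
  assumes "forecasting_system \<phi>"
  shows "supermartingale \<phi> F \<longleftrightarrow>
    (\<forall>s. \<forall>p\<in>\<phi> s. p * (F (s @ [True]) - F s) + (1 - p) * (F (s @ [False]) - F s) \<le> 0)"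
proof (rule supermartingale_iff)
  show "\<phi> s \<noteq> {}" "\<phi> s \<subseteq> {0..1}" for s
    using forecasting_system_bounds[OF assms, of s] by auto
qed

lemma length_prefix [simp]: "length (prefix \<omega> n) = n"
  by (simp add: prefix_def)

lemma take_prefix: "k \<le> n \<Longrightarrow> take k (prefix \<omega> n) = prefix \<omega> k"
  by (simp add: prefix_def take_map)

lemma prefix_Suc: "prefix \<omega> (Suc n) = prefix \<omega> n @ [\<omega> n]"
  by (simp add: prefix_def)

lemma mult_proc_Nil [simp]: "mult_proc D [] = 1"
  by (simp add: mult_proc_def)

lemma mult_proc_snoc: "mult_proc D (s @ [x]) = mult_proc D s * D s x"
proof -
  have "mult_proc D (s @ [x]) = (\<Prod>k<length s. D (take k (s @ [x])) ((s @ [x]) ! k)) * D s x"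
    by (simp add: mult_proc_def prod.lessThan_Suc)
  also have "(\<Prod>k<length s. D (take k (s @ [x])) ((s @ [x]) ! k)) = mult_proc D s"
    unfolding mult_proc_def by (rule prod.cong) (auto simp: nth_append)
  finally show ?thesis .
qed

lemma sum_ge_neg_if_eventually_nonneg:
  fixes t :: "nat \<Rightarrow> real"
  assumes "\<And>k. -1 \<le> t k" and "\<And>k. N \<le> k \<Longrightarrow> 0 \<le> t k"
  shows "- real N \<le> (\<Sum>k<n. t k)"
proof -
  have "- real (min n N) \<le> (\<Sum>k<n. t k)"
  proof (induction n)
    case (Suc n)
    show ?case
    proof (cases "n < N")
      case True
      then have "min (Suc n) N = Suc (min n N)" by simp
      then show ?thesis using Suc assms(1)[of n] by simp
    next
      case False
      then have "min (Suc n) N = min n N" by simp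
      then show ?thesis using Suc assms(2)[of n] False by simp
    qed
  qed simp
  then show ?thesis by linarith
qed

lemma liminf_nonneg_perturbed:
  fixes f g c :: "nat \<Rightarrow> real"
  assumes g: "0 \<le> liminf (\<lambda>n. ereal (g n))" and c: "c \<longlonglongrightarrow> 0"
    and fg: "eventually (\<lambda>n. g n - c n \<le> f n) sequentially"
  shows "0 \<le> liminf (\<lambda>n. ereal (f n))"
  unfolding le_Liminf_iff
proof (intro allI impI)
  fix y :: ereal assume "y < 0"
  then obtain r where r: "y < ereal r" "r < 0" using ereal_dense2 by force
  have "ereal (r / 2) < 0" using r(2) by simp
  then have "eventually (\<lambda>n. ereal (r / 2) < ereal (g n)) sequentially"
    using g unfolding le_Liminf_iff by blast
  moreover have "eventually (\<lambda>n. c n < - r / 2) sequentially"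
    using order_tendstoD(2)[OF c] r(2) by simp
  ultimately show "eventually (\<lambda>n. y < ereal (f n)) sequentially"
    using fg
  proof eventually_elim
    case (elim n)
    then have "ereal r < ereal (f n)" by simp
    then show ?case using r(1) by (rule less_trans[rotated])
  qed
qed

lemma liminf_selected_average_mono:
  fixes sel x l a :: "nat \<Rightarrow> real"
  assumes sel: "\<And>k. sel k = 0 \<or> sel k = 1"
    and S: "filterlim (\<lambda>n. \<Sum>k<n. sel k) at_top sequentially"
    and "\<And>k. a k \<le> l k + 1" and "\<And>k. N \<le> k \<Longrightarrow> a k \<le> l k"
    and l: "0 \<le> liminf (\<lambda>n. ereal ((\<Sum>k<n. sel k * (x k - l k)) / (\<Sum>k<n. sel k)))"
  shows "0 \<le> liminf (\<lambda>n. ereal ((\<Sum>k<n. sel k * (x k - a k)) / (\<Sum>k<n. sel k)))"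
proof (rule liminf_nonneg_perturbed[OF l])
  let ?S = "\<lambda>n. \<Sum>k<n. sel k"
  show "(\<lambda>n. real N / ?S n) \<longlonglongrightarrow> 0"
    by (rule tendsto_divide_0[OF tendsto_const filterlim_at_top_imp_at_infinity[OF S]])
  have diff: "(\<Sum>k<n. sel k * (x k - l k)) - real N \<le> (\<Sum>k<n. sel k * (x k - a k))" for n
  proof -
    have "- real N \<le> (\<Sum>k<n. sel k * (l k - a k))"
    proof (rule sum_ge_neg_if_eventually_nonneg)
      show "-1 \<le> sel k * (l k - a k)" for k using sel[of k] assms(3)[of k] by auto
      show "0 \<le> sel k * (l k - a k)" if "N \<le> k" for k using sel[of k] assms(4)[OF that] by auto
    qed
    moreover have "(\<Sum>k<n. sel k * (x k - a k)) - (\<Sum>k<n. sel k * (x k - l k))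
        = (\<Sum>k<n. sel k * (l k - a k))"
      by (simp add: sum_subtractf[symmetric] algebra_simps)
    ultimately show ?thesis by linarith
  qed
  moreover have "eventually (\<lambda>n. 0 < ?S n) sequentially"
    using S by (simp add: filterlim_at_top_dense)
  ultimately show "eventually (\<lambda>n. (\<Sum>k<n. sel k * (x k - l k)) / ?S n - real N / ?S n
      \<le> (\<Sum>k<n. sel k * (x k - a k)) / ?S n) sequentially"
    by (auto elim!: eventually_mono simp: diff_divide_distrib[symmetric]
        intro: divide_right_mono[OF diff])
qed

lemma limsup_selected_average_mono:
  fixes sel x u b :: "nat \<Rightarrow> real"
  assumes sel: "\<And>k. sel k = 0 \<or> sel k = 1"
    and S: "filterlim (\<lambda>n. \<Sum>k<n. sel k) at_top sequentially"
    and "\<And>k. u k \<le> b k + 1" and "\<And>k. N \<le> k \<Longrightarrow> u k \<le> b k"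
    and u: "limsup (\<lambda>n. ereal ((\<Sum>k<n. sel k * (x k - u k)) / (\<Sum>k<n. sel k))) \<le> 0"
  shows "limsup (\<lambda>n. ereal ((\<Sum>k<n. sel k * (x k - b k)) / (\<Sum>k<n. sel k))) \<le> 0"
proof -
  have neg: "liminf (\<lambda>n. ereal ((\<Sum>k<n. sel k * (- x k - - y k)) / (\<Sum>k<n. sel k)))
      = - limsup (\<lambda>n. ereal ((\<Sum>k<n. sel k * (x k - y k)) / (\<Sum>k<n. sel k)))" for y
  proof -
    have "(\<Sum>k<n. sel k * (- x k - - y k)) = - (\<Sum>k<n. sel k * (x k - y k))" for n
      by (simp add: sum_negf[symmetric] algebra_simps)
    then show ?thesis
      using ereal_Liminf_uminus[of sequentially
          "\<lambda>n. ereal ((\<Sum>k<n. sel k * (x k - y k)) / (\<Sum>k<n. sel k))"]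
      by simp
  qed
  have "0 \<le> liminf (\<lambda>n. ereal ((\<Sum>k<n. sel k * (- x k - - b k)) / (\<Sum>k<n. sel k)))"
  proof (rule liminf_selected_average_mono[OF sel S])
    show "- b k \<le> - u k + 1" for k using assms(3)[of k] by simp
    show "- b k \<le> - u k" if "N \<le> k" for k using assms(4)[OF that] by simp
    show "0 \<le> liminf (\<lambda>n. ereal ((\<Sum>k<n. sel k * (- x k - - u k)) / (\<Sum>k<n. sel k)))"
      unfolding neg using u by simp
  qed
  then show ?thesis unfolding neg by simp
qed

locale limit_forecast =
  fixes \<phi> :: "bool list \<Rightarrow> real set" and \<omega> :: "nat \<Rightarrow> bool" and e1 e2 :: real
  assumes forecasting_system: "forecasting_system \<phi>" and e1_pos: "e1 > 0" and e2_pos: "e2 > 0"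
begin

definition L :: real where "L = real_of_ereal (liminf (\<lambda>n. ereal (lowerF \<phi> (prefix \<omega> n))))"
definition U :: real where "U = real_of_ereal (limsup (\<lambda>n. ereal (upperF \<phi> (prefix \<omega> n))))"
definition I :: "real set" where "I = limit_interval \<phi> \<omega> e1 e2"

lemmas bounds = forecasting_system_bounds[OF forecasting_system]

lemma liminf_lowerF: "liminf (\<lambda>n. ereal (lowerF \<phi> (prefix \<omega> n))) = ereal L"
  and L_bounds: "0 \<le> L" "L \<le> 1"
proof -
  have "0 \<le> liminf (\<lambda>n. ereal (lowerF \<phi> (prefix \<omega> n)))"
    by (rule Liminf_bounded) (simp add: bounds)
  moreover have "lowerF \<phi> s \<le> 1" for s using bounds(3,4)[of s] by linarith
  then have "liminf (\<lambda>n. ereal (lowerF \<phi> (prefix \<omega> n))) \<le> 1"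
    by (intro Liminf_le) auto
  ultimately show "liminf (\<lambda>n. ereal (lowerF \<phi> (prefix \<omega> n))) = ereal L" "0 \<le> L" "L \<le> 1"
    unfolding L_def by (cases "liminf (\<lambda>n. ereal (lowerF \<phi> (prefix \<omega> n)))"; simp)+
qed

lemma limsup_upperF: "limsup (\<lambda>n. ereal (upperF \<phi> (prefix \<omega> n))) = ereal U"
  and U_bounds: "0 \<le> U" "U \<le> 1"
proof -
  have "0 \<le> upperF \<phi> s" for s using bounds(2,3)[of s] by linarith
  then have "0 \<le> limsup (\<lambda>n. ereal (upperF \<phi> (prefix \<omega> n)))"
    by (intro le_Limsup) auto
  moreover have "limsup (\<lambda>n. ereal (upperF \<phi> (prefix \<omega> n))) \<le> 1"
    by (rule Limsup_bounded) (simp add: bounds)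
  ultimately show "limsup (\<lambda>n. ereal (upperF \<phi> (prefix \<omega> n))) = ereal U" "0 \<le> U" "U \<le> 1"
    unfolding U_def by (cases "limsup (\<lambda>n. ereal (upperF \<phi> (prefix \<omega> n)))"; simp)+
qed

lemma L_le_U: "L \<le> U"
proof -
  have "liminf (\<lambda>n. ereal (lowerF \<phi> (prefix \<omega> n))) \<le> liminf (\<lambda>n. ereal (upperF \<phi> (prefix \<omega> n)))"
    by (rule Liminf_mono) (simp add: bounds)
  also have "\<dots> \<le> limsup (\<lambda>n. ereal (upperF \<phi> (prefix \<omega> n)))"
    by (rule Liminf_le_Limsup) simp
  finally show ?thesis using liminf_lowerF limsup_upperF by simp
qed

lemma I_eq: "I = {max (L - e1) 0 .. min (U + e2) 1}"
  unfolding I_def limit_interval_def L_def[symmetric] U_def[symmetric] by auto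

lemma lowerF_I: "lowerF (\<lambda>s. I) s = max (L - e1) 0"
  and upperF_I: "upperF (\<lambda>s. I) s = min (U + e2) 1"
  and I_nonempty: "I \<noteq> {}"
  and I_subset: "I \<subseteq> {0..1}"
proof -
  have "max (L - e1) 0 \<le> min (U + e2) 1" using L_bounds U_bounds L_le_U e1_pos e2_pos by auto
  then show "lowerF (\<lambda>s. I) s = max (L - e1) 0" "upperF (\<lambda>s. I) s = min (U + e2) 1"
    "I \<noteq> {}" "I \<subseteq> {0..1}"
    by (auto simp: I_eq lowerF_def upperF_def)
qed

lemma supermartingale_I_iff:
  "supermartingale (\<lambda>s. I) F \<longleftrightarrow>
    (\<forall>s. \<forall>p\<in>I. p * (F (s @ [True]) - F s) + (1 - p) * (F (s @ [False]) - F s) \<le> 0)"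
  using supermartingale_iff[of "\<lambda>s. I" F] I_nonempty I_subset by auto

lemma eventually_lowerF_gt: "c < L \<Longrightarrow> eventually (\<lambda>n. c < lowerF \<phi> (prefix \<omega> n)) sequentially"
  using less_LiminfD[of "ereal c" sequentially "\<lambda>n. ereal (lowerF \<phi> (prefix \<omega> n))"]
  by (simp add: liminf_lowerF)

lemma eventually_upperF_lt: "U < c \<Longrightarrow> eventually (\<lambda>n. upperF \<phi> (prefix \<omega> n) < c) sequentially"
  using Limsup_lessD[of sequentially "\<lambda>n. ereal (upperF \<phi> (prefix \<omega> n))" "ereal c"]
  by (simp add: limsup_upperF)

lemma CH_cond_limit_interval:
  assumes "CH_cond \<phi> \<omega> Sel"
  shows "CH_cond (\<lambda>s. I) \<omega> Sel"
  unfolding CH_cond_def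
proof (intro impI conjI)
  let ?sel = "\<lambda>k. of_bool (Sel (prefix \<omega> k)) :: real"
  assume S: "filterlim (\<lambda>n. \<Sum>k<n. ?sel k) at_top sequentially"
  have sel: "?sel k = 0 \<or> ?sel k = 1" for k by simp
  obtain N1 where N1: "\<And>k. N1 \<le> k \<Longrightarrow> L - e1 < lowerF \<phi> (prefix \<omega> k)"
    using eventually_lowerF_gt[of "L - e1"] e1_pos by (auto simp: eventually_sequentially)
  obtain N2 where N2: "\<And>k. N2 \<le> k \<Longrightarrow> upperF \<phi> (prefix \<omega> k) < U + e2"
    using eventually_upperF_lt[of "U + e2"] e2_pos by (auto simp: eventually_sequentially)
  show "0 \<le> liminf (\<lambda>n. ereal ((\<Sum>k<n. ?sel k * (of_bool (\<omega> k) - lowerF (\<lambda>s. I) (prefix \<omega> k)))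
      / (\<Sum>k<n. ?sel k)))"
  proof (rule liminf_selected_average_mono[OF sel S])
    show "lowerF (\<lambda>s. I) (prefix \<omega> k) \<le> lowerF \<phi> (prefix \<omega> k) + 1" for k
      using bounds(2)[of "prefix \<omega> k"] L_bounds e1_pos by (simp add: lowerF_I)
    show "lowerF (\<lambda>s. I) (prefix \<omega> k) \<le> lowerF \<phi> (prefix \<omega> k)" if "N1 \<le> k" for k
      using bounds(2)[of "prefix \<omega> k"] N1[OF that] by (simp add: lowerF_I)
  qed (use assms S in \<open>simp add: CH_cond_def\<close>)
  show "limsup (\<lambda>n. ereal ((\<Sum>k<n. ?sel k * (of_bool (\<omega> k) - upperF (\<lambda>s. I) (prefix \<omega> k)))
      / (\<Sum>k<n. ?sel k))) \<le> 0"
  proof (rule limsup_selected_average_mono[OF sel S])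
    show "upperF \<phi> (prefix \<omega> k) \<le> upperF (\<lambda>s. I) (prefix \<omega> k) + 1" for k
      using bounds(4)[of "prefix \<omega> k"] U_bounds e2_pos by (simp add: upperF_I)
    show "upperF \<phi> (prefix \<omega> k) \<le> upperF (\<lambda>s. I) (prefix \<omega> k)" if "N2 \<le> k" for k
      using bounds(4)[of "prefix \<omega> k"] N2[OF that] by (simp add: upperF_I)
  qed (use assms S in \<open>simp add: CH_cond_def\<close>)
qed

lemma recursive_test_for_subset_I:
  assumes "computable_fs \<phi>"
  obtains N G where "N \<ge> 1" and "recursive1 G" and "\<And>s. G (enc_sit s) = 0 \<Longrightarrow> \<phi> s \<subseteq> I"
    and "\<And>n. N \<le> n \<Longrightarrow> G (enc_sit (prefix \<omega> n)) = 0"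
proof -
  obtain lt where lt: "recursive1 lt" "\<And>s. lt (enc_sit s) = 0 \<Longrightarrow> L - e1 \<le> lowerF \<phi> s"
    "\<And>s. L - e1 / 2 \<le> lowerF \<phi> s \<Longrightarrow> lt (enc_sit s) = 0"
  proof (cases "L - e1 < 0")
    case True
    then have "L - e1 \<le> lowerF \<phi> s" for s using bounds(2)[of s] by linarith
    then show ?thesis using that[of "\<lambda>c. 0"] by (simp add: recursive1_const)
  next
    case False
    have "computable_on enc_sit (lowerF \<phi>)" using assms unfolding computable_fs_def by blast
    moreover have "0 \<le> L - e1" "L - e1 < L - e1 / 2" using False e1_pos by auto
    ultimately show ?thesis using that by (rule computable_lower_bound_test)
  qed
  obtain ut where ut: "recursive1 ut" "\<And>s. ut (enc_sit s) = 0 \<Longrightarrow> upperF \<phi> s \<le> U + e2"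
    "\<And>s. upperF \<phi> s \<le> U + e2 / 2 \<Longrightarrow> ut (enc_sit s) = 0"
    using computable_upper_bound_test[of enc_sit "upperF \<phi>" "U + e2 / 2" "U + e2"]
      assms U_bounds e2_pos
    unfolding computable_fs_def by auto
  obtain N1 where N1: "\<And>n. N1 \<le> n \<Longrightarrow> L - e1 / 2 < lowerF \<phi> (prefix \<omega> n)"
    using eventually_lowerF_gt[of "L - e1 / 2"] e1_pos by (auto simp: eventually_sequentially)
  obtain N2 where N2: "\<And>n. N2 \<le> n \<Longrightarrow> upperF \<phi> (prefix \<omega> n) < U + e2 / 2"
    using eventually_upperF_lt[of "U + e2 / 2"] e2_pos by (auto simp: eventually_sequentially)
  show ?thesis
  proof
    show "recursive1 (\<lambda>c. lt c + ut c)" using lt(1) ut(1) by (rule recursive1_add)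
    show "\<phi> s \<subseteq> I" if "lt (enc_sit s) + ut (enc_sit s) = 0" for s
      using that lt(2) ut(2) bounds(1,2,4)[of s] by (auto simp: I_eq)
    show "lt (enc_sit (prefix \<omega> n)) + ut (enc_sit (prefix \<omega> n)) = 0" if "Suc (max N1 N2) \<le> n" for n
    proof -
      have "N1 \<le> n" "N2 \<le> n" using that by auto
      then show ?thesis using lt(3)[OF less_imp_le[OF N1]] ut(3)[OF less_imp_le[OF N2]] by simp
    qed
  qed simp
qed

end

section \<open>Transferring tests from the limit interval to the forecasting system\<close>

lemma limsup_eventually_divide:
  fixes f g :: "nat \<Rightarrow> real"
  assumes "0 < c" and "eventually (\<lambda>n. f n = g n / c) sequentially"
  shows "limsup (\<lambda>n. ereal (f n)) = limsup (\<lambda>n. ereal (g n)) * ereal (1 / c)"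
proof -
  have "limsup (\<lambda>n. ereal (f n)) = limsup (\<lambda>n. ereal (g n) * ereal (1 / c))"
    using assms(2) by (intro Limsup_eq) (auto elim: eventually_mono)
  also have "\<dots> = limsup (\<lambda>n. ereal (g n)) * ereal (1 / c)"
    by (rule limsup_ereal_mult_right) (use assms(1) in simp)
  finally show ?thesis .
qed

lemma unbounded_on_eventually_divide:
  assumes "unbounded_on T \<omega>" and "0 < c"
    and "eventually (\<lambda>n. T' (prefix \<omega> n) = T (prefix \<omega> n) / c) sequentially"
  shows "unbounded_on T' \<omega>"
  using assms limsup_eventually_divide[OF assms(2,3)] by (simp add: unbounded_on_def)

lemma obtain_nat_bound_on_length:
  fixes f :: "bool list \<Rightarrow> real"
  obtains M :: nat where "M \<ge> 1" and "\<And>u. length u = n \<Longrightarrow> f u \<le> real M"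
proof -
  have "finite {u :: bool list. length u = n}"
    using finite_lists_length_eq[of "UNIV :: bool set" n] by simp
  then have "bdd_above (f ` {u. length u = n})" by (intro bdd_above_finite finite_imageI)
  then obtain b where b: "\<And>u. length u = n \<Longrightarrow> f u \<le> b" by (auto simp: bdd_above_def)
  obtain M :: nat where "b < real M" using reals_Archimedean2 by blast
  with b show ?thesis using that[of "Suc M"] by force
qed

lemma computable_on_divide:
  assumes "computable_on enc r" and "M \<ge> 1"
  shows "computable_on enc (\<lambda>d. r d / real M)"
proof -
  obtain q where q: "recursive1 q" "\<And>d n. \<bar>r d - rat_code (q (prod_encode (enc d, n)))\<bar> < (1/2) ^ n"
    using assms(1) unfolding computable_on_def by blast
  have "\<bar>r d / real M - rat_code (code_divide M (q (prod_encode (enc d, n))))\<bar>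
      \<le> \<bar>r d - rat_code (q (prod_encode (enc d, n)))\<bar>" for d n
    using assms(2) by (simp add: rat_code_code_divide diff_divide_distrib[symmetric] divide_le_eq
        mult_le_cancel_left1)
  then show ?thesis
    unfolding computable_on_def using q by (blast intro: le_less_trans recursive1_code_divide)
qed

lemma step_nonpos_divide:
  fixes T :: "bool list \<Rightarrow> real"
  assumes "p * (T (u @ [True]) - T u) + (1 - p) * (T (u @ [False]) - T u) \<le> 0" and "0 < c"
  shows "p * (T (u @ [True]) / c - T u / c) + (1 - p) * (T (u @ [False]) / c - T u / c) \<le> 0"
proof -
  have "p * (T (u @ [True]) / c - T u / c) + (1 - p) * (T (u @ [False]) / c - T u / c)
      = (p * (T (u @ [True]) - T u) + (1 - p) * (T (u @ [False]) - T u)) / c"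
    using assms(2) by (simp add: field_simps)
  then show ?thesis using assms by (simp add: divide_nonpos_pos)
qed

lemma step_nonpos_if_decreasing:
  fixes p :: real
  assumes "0 \<le> p" "p \<le> 1" and "F (s @ [True]) \<le> F s" and "F (s @ [False]) \<le> F s"
  shows "p * (F (s @ [True]) - F s) + (1 - p) * (F (s @ [False]) - F s) \<le> 0"
  using assms by (simp add: add_nonpos_nonpos mult_nonneg_nonpos)

locale limit_forecast_filter = limit_forecast +
  fixes G :: "nat \<Rightarrow> nat" and N :: nat
  assumes N_pos: "N \<ge> 1" and recursive_G: "recursive1 G"
    and G_subset_I: "\<And>s. G (enc_sit s) = 0 \<Longrightarrow> \<phi> s \<subseteq> I"
    and G_prefix: "\<And>n. N \<le> n \<Longrightarrow> G (enc_sit (prefix \<omega> n)) = 0"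
begin

definition kept :: "bool list \<Rightarrow> bool" where
  "kept s \<longleftrightarrow> length s < N \<or> G (enc_sit s) = 0"

definition thin :: "bool list \<Rightarrow> bool list" where
  "thin = kept_outcomes kept"

lemma thin_snoc: "thin (s @ [x]) = thin s @ (if kept s then [x] else [])"
  unfolding thin_def by (rule kept_outcomes_snoc)

lemma thin_short: "length s \<le> N \<Longrightarrow> thin s = s"
  unfolding thin_def by (rule kept_outcomes_ident) (simp add: kept_def)

lemma thin_prefix: "thin (prefix \<omega> n) = prefix \<omega> n"
  unfolding thin_def
proof (rule kept_outcomes_ident)
  fix k assume "k < length (prefix \<omega> n)"
  then show "kept (take k (prefix \<omega> n))"
    using G_prefix[of k] by (cases "k < N") (auto simp: kept_def take_prefix)
qed

definition kept_code :: "nat \<Rightarrow> nat" where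
  "kept_code c = (if N \<le> code_length c then G c else 0)"

definition thin_code :: "nat \<Rightarrow> nat" where
  "thin_code = kept_outcomes_code kept_code"

lemma recursive1_thin_code: "recursive1 (\<lambda>x. thin_code (a x))" if "recursive1 a"
proof -
  have "recursive1 kept_code"
    unfolding kept_code_def[abs_def] using recursive_G
    by (intro recursive1_if_le recursive1_code_length recursive1_ident recursive1_const)
  from recursive1_comp[OF recursive1_kept_outcomes_code[OF this] that] show ?thesis
    unfolding thin_code_def .
qed

lemma thin_code_enc_sit: "thin_code (enc_sit s) = enc_sit (thin s)"
proof -
  have "(\<lambda>p. kept_code (enc_sit p) = 0) = kept"
    by (auto simp: kept_code_def kept_def fun_eq_iff)
  then show ?thesis by (simp add: thin_code_def kept_outcomes_code_enc_sit thin_def)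
qed

lemma kept_forecast_in_I: "N \<le> length s \<Longrightarrow> kept s \<Longrightarrow> p \<in> \<phi> s \<Longrightarrow> p \<in> I"
  using G_subset_I by (auto simp: kept_def)

text \<open>Before time \<open>N\<close> the forecasts of \<open>\<phi>\<close> need not lie in \<open>I\<close>, so the test is frozen at \<open>1\<close>
  there; \<open>M\<close> bounds \<open>T\<close> on the situations of length \<open>N\<close>, so the step to time \<open>N\<close> goes down.\<close>

definition filtered_test :: "(bool list \<Rightarrow> real) \<Rightarrow> nat \<Rightarrow> bool list \<Rightarrow> real" where
  "filtered_test T M s = (if length s < N then 1 else T (thin s) / real M)"

lemma test_supermartingale_filtered_test:
  assumes T: "test_supermartingale (\<lambda>s. I) T" and M: "M \<ge> 1"
    and TM: "\<And>u. length u = N \<Longrightarrow> T u \<le> real M"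
  shows "test_supermartingale \<phi> (filtered_test T M)"
proof -
  let ?F = "filtered_test T M"
  have T_step: "\<And>s p. p \<in> I \<Longrightarrow>
      p * (T (s @ [True]) - T s) + (1 - p) * (T (s @ [False]) - T s) \<le> 0"
    using T unfolding test_supermartingale_def supermartingale_I_iff by blast
  have "p * (?F (s @ [True]) - ?F s) + (1 - p) * (?F (s @ [False]) - ?F s) \<le> 0"
    if p: "p \<in> \<phi> s" for s p
  proof -
    consider "Suc (length s) < N" | "Suc (length s) = N" | "N \<le> length s" "kept s"
      | "N \<le> length s" "\<not> kept s"
      by linarith
    then show ?thesis
    proof cases
      case 2
      have "?F (s @ [x]) \<le> ?F s" for x
        using 2 TM[of "s @ [x]"] M by (simp add: filtered_test_def thin_short)
      then show ?thesis
        using forecasting_system_in_unit_interval[OF forecasting_system p]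
        by (intro step_nonpos_if_decreasing) auto
    next
      case 3
      then show ?thesis
        using step_nonpos_divide[OF T_step[OF kept_forecast_in_I[OF 3 p]], of "real M"] M
        by (simp add: filtered_test_def thin_snoc)
    qed (simp_all add: filtered_test_def thin_snoc)
  qed
  moreover have "?F s \<ge> 0" for s using T by (simp add: filtered_test_def test_supermartingale_def)
  ultimately show ?thesis
    using N_pos
    unfolding test_supermartingale_def supermartingale_iff_forecasting_system[OF forecasting_system]
    by (simp add: filtered_test_def)
qed

lemma filtered_test_prefix: "N \<le> n \<Longrightarrow> filtered_test T M (prefix \<omega> n) = T (prefix \<omega> n) / real M"
  by (simp add: filtered_test_def thin_prefix)

lemma unbounded_on_filtered_test: "unbounded_on T \<omega> \<Longrightarrow> M \<ge> 1 \<Longrightarrow> unbounded_on (filtered_test T M) \<omega>"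
  by (rule unbounded_on_eventually_divide[where c = "real M"])
    (auto simp: filtered_test_prefix eventually_sequentially intro!: exI[of _ N])

definition filtered_test_approx :: "(nat \<Rightarrow> nat) \<Rightarrow> nat \<Rightarrow> nat \<Rightarrow> nat" where
  "filtered_test_approx q M x =
     (if N \<le> code_length (decode_fst x)
      then code_divide M (q (prod_encode (thin_code (decode_fst x), decode_snd x)))
      else code_one)"

lemma recursive1_filtered_test_approx:
  assumes "recursive1 q"
  shows "recursive1 (filtered_test_approx q M)"
  unfolding filtered_test_approx_def[abs_def]
  by (intro recursive1_if_le recursive1_const recursive1_code_length recursive1_decode_fst
      recursive1_ident recursive1_code_divide recursive1_comp[OF assms] recursive1_prod_encode
      recursive1_thin_code recursive1_decode_snd)

lemma rat_code_filtered_test_approx: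
  "M \<ge> 1 \<Longrightarrow> rat_code (filtered_test_approx q M (prod_encode (enc_sit s, n))) =
     (if N \<le> length s then rat_code (q (prod_encode (enc_sit (thin s), n))) / real M else 1)"
  by (simp add: filtered_test_approx_def thin_code_enc_sit rat_code_code_divide)

lemma computable_filtered_test:
  assumes "computable_on enc_sit T" and "M \<ge> 1"
  shows "computable_on enc_sit (filtered_test T M)"
proof -
  obtain q where q: "recursive1 q"
    "\<And>d n. \<bar>T d - rat_code (q (prod_encode (enc_sit d, n)))\<bar> < (1/2) ^ n"
    using assms(1) unfolding computable_on_def by blast
  have "\<bar>filtered_test T M d - rat_code (filtered_test_approx q M (prod_encode (enc_sit d, n)))\<bar>
      < (1/2) ^ n" for d n
  proof (cases "N \<le> length d")
    case True
    have "\<bar>T (thin d) / real M - rat_code (q (prod_encode (enc_sit (thin d), n))) / real M\<bar>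
        \<le> \<bar>T (thin d) - rat_code (q (prod_encode (enc_sit (thin d), n)))\<bar>"
      using assms(2) by (simp add: diff_divide_distrib[symmetric] divide_le_eq mult_le_cancel_left1)
    then show ?thesis
      using True q(2) assms(2) by (simp add: rat_code_filtered_test_approx filtered_test_def)
        (meson le_less_trans)
  qed (use assms(2) in \<open>simp add: rat_code_filtered_test_approx filtered_test_def\<close>)
  then show ?thesis
    unfolding computable_on_def using recursive1_filtered_test_approx[OF q(1)] by blast
qed

lemma lsc_filtered_test:
  assumes "lsc_on enc_sit T" and "M \<ge> 1"
  shows "lsc_on enc_sit (filtered_test T M)"
proof -
  obtain q where q: "recursive1 q"
    "\<And>d n. rat_code (q (prod_encode (enc_sit d, n))) \<le> rat_code (q (prod_encode (enc_sit d, Suc n)))"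
    "\<And>d. (\<lambda>n. rat_code (q (prod_encode (enc_sit d, n)))) \<longlonglongrightarrow> T d"
    using assms(1) unfolding lsc_on_def by blast
  have "rat_code (filtered_test_approx q M (prod_encode (enc_sit d, n)))
      \<le> rat_code (filtered_test_approx q M (prod_encode (enc_sit d, Suc n)))" for d n
    using q(2)[of "thin d" n] assms(2)
    by (simp add: rat_code_filtered_test_approx divide_right_mono)
  moreover have "(\<lambda>n. rat_code (filtered_test_approx q M (prod_encode (enc_sit d, n))))
      \<longlonglongrightarrow> filtered_test T M d" for d
    using tendsto_divide[OF q(3)[of "thin d"] tendsto_const[of "real M"]] assms(2)
    by (simp add: rat_code_filtered_test_approx filtered_test_def)
  ultimately show ?thesis
    unfolding lsc_on_def using recursive1_filtered_test_approx[OF q(1)] by blast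
qed

text \<open>For multiplicative tests the factors up to time \<open>N\<close> are replaced by \<open>1\<close>, which divides the
  product by its value at time \<open>N\<close>; this is impossible where that value vanishes, and there the
  filtered multipliers are all \<open>1\<close>.\<close>

definition null_starts :: "(bool list \<Rightarrow> bool \<Rightarrow> real) \<Rightarrow> bool list set" where
  "null_starts D = {u. length u = N \<and> mult_proc D u = 0}"

definition filtered_multiplier :: "(bool list \<Rightarrow> bool \<Rightarrow> real) \<Rightarrow> bool list \<Rightarrow> bool \<Rightarrow> real" where
  "filtered_multiplier D s x =
     (if N \<le> length s \<and> take N s \<notin> null_starts D \<and> kept s then D (thin s) x else 1)"

lemma finite_null_starts: "finite (null_starts D)"
proof -
  have "finite {u :: bool list. length u = N}"
    using finite_lists_length_eq[of "UNIV :: bool set" N] by simp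
  then show ?thesis unfolding null_starts_def by (rule rev_finite_subset) auto
qed

lemma mult_proc_filtered_multiplier:
  "mult_proc (filtered_multiplier D) s = (if length s < N \<or> take N s \<in> null_starts D then 1
      else mult_proc D (thin s) / mult_proc D (take N s))"
proof (induction s rule: rev_induct)
  case Nil
  then show ?case using N_pos by simp
next
  case (snoc x s)
  consider "Suc (length s) < N" | "Suc (length s) = N" | "N \<le> length s" by linarith
  then show ?case
  proof cases
    case 2
    then have "thin (s @ [x]) = s @ [x]" by (intro thin_short) simp
    then show ?thesis
      using snoc 2 by (simp add: mult_proc_snoc filtered_multiplier_def null_starts_def)
  next
    case 3
    then show ?thesis
      using snoc by (auto simp: mult_proc_snoc filtered_multiplier_def thin_snoc)
  qed (use snoc in \<open>simp add: mult_proc_snoc filtered_multiplier_def\<close>)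
qed

lemma test_supermartingale_filtered_multiplier:
  assumes T: "test_supermartingale (\<lambda>s. I) (mult_proc D)"
  shows "test_supermartingale \<phi> (mult_proc (filtered_multiplier D))"
proof -
  let ?T = "mult_proc D" and ?F = "mult_proc (filtered_multiplier D)"
  have T_step: "\<And>s p. p \<in> I \<Longrightarrow>
      p * (?T (s @ [True]) - ?T s) + (1 - p) * (?T (s @ [False]) - ?T s) \<le> 0"
    using T unfolding test_supermartingale_def supermartingale_I_iff by blast
  have T_nonneg: "\<And>s. ?T s \<ge> 0" using T unfolding test_supermartingale_def by blast
  have "p * (?F (s @ [True]) - ?F s) + (1 - p) * (?F (s @ [False]) - ?F s) \<le> 0"
    if p: "p \<in> \<phi> s" for s p
  proof -
    consider "Suc (length s) < N" | "Suc (length s) = N" | "N \<le> length s" "take N s \<in> null_starts D"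
      | "N \<le> length s" "take N s \<notin> null_starts D" "kept s"
      | "N \<le> length s" "take N s \<notin> null_starts D" "\<not> kept s"
      by linarith
    then show ?thesis
    proof cases
      case 2
      then have "?F (s @ [x]) = 1" for x
        by (cases "s @ [x] \<in> null_starts D")
          (simp_all add: mult_proc_filtered_multiplier thin_short, simp add: null_starts_def)
      then show ?thesis using 2 by (simp add: mult_proc_filtered_multiplier)
    next
      case 4
      have "?T (take N s) > 0"
        using 4 T_nonneg[of "take N s"] by (auto simp: null_starts_def order_less_le)
      then show ?thesis
        using step_nonpos_divide[OF T_step[OF kept_forecast_in_I[OF 4(1,3) p]]] 4
        by (simp add: mult_proc_filtered_multiplier thin_snoc)
    qed (simp_all add: mult_proc_filtered_multiplier thin_snoc)
  qed
  moreover have "?F s \<ge> 0" for s using T_nonneg by (simp add: mult_proc_filtered_multiplier)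
  ultimately show ?thesis
    unfolding test_supermartingale_def supermartingale_iff_forecasting_system[OF forecasting_system]
    by simp
qed

lemma unbounded_on_filtered_multiplier:
  assumes T: "test_supermartingale (\<lambda>s. I) (mult_proc D)"
    and unbounded: "unbounded_on (mult_proc D) \<omega>"
  shows "unbounded_on (mult_proc (filtered_multiplier D)) \<omega>"
proof -
  let ?T = "mult_proc D"
  have "?T (prefix \<omega> N) \<noteq> 0"
  proof
    assume zero: "?T (prefix \<omega> N) = 0"
    have "?T (prefix \<omega> n) = 0" if "N \<le> n" for n
      using that
    proof (induction n rule: dec_induct)
      case (step n)
      then show ?case by (simp add: prefix_Suc mult_proc_snoc)
    qed (rule zero)
    then have "eventually (\<lambda>n. ereal (?T (prefix \<omega> n)) = 0) sequentially"
      by (auto simp: eventually_sequentially)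
    then have "limsup (\<lambda>n. ereal (?T (prefix \<omega> n))) = limsup (\<lambda>n. 0)" by (rule Limsup_eq)
    then show False using unbounded by (simp add: unbounded_on_def Limsup_const)
  qed
  moreover have "?T (prefix \<omega> N) \<ge> 0" using T by (simp add: test_supermartingale_def)
  ultimately have "?T (prefix \<omega> N) > 0" and "prefix \<omega> N \<notin> null_starts D"
    by (auto simp: null_starts_def)
  then show ?thesis
    by (intro unbounded_on_eventually_divide[OF unbounded, where c = "?T (prefix \<omega> N)"])
      (auto simp: mult_proc_filtered_multiplier take_prefix thin_prefix eventually_sequentially
        intro!: exI[of _ N])
qed

definition filtered_multiplier_approx ::
  "(bool list \<Rightarrow> bool \<Rightarrow> real) \<Rightarrow> (nat \<Rightarrow> nat) \<Rightarrow> nat \<Rightarrow> nat" where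
  "filtered_multiplier_approx D q y =
     (if code_length (decode_fst (decode_fst y)) < N
         \<or> code_take N (decode_fst (decode_fst y)) \<in> enc_sit ` null_starts D
         \<or> G (decode_fst (decode_fst y)) \<noteq> 0
      then code_one
      else q (prod_encode (prod_encode (thin_code (decode_fst (decode_fst y)),
        decode_snd (decode_fst y)), decode_snd y)))"

lemma recursive1_filtered_multiplier_approx:
  assumes "recursive1 q"
  shows "recursive1 (filtered_multiplier_approx D q)"
proof -
  let ?c = "\<lambda>y. decode_fst (decode_fst y)"
  let ?r = "\<lambda>y. q (prod_encode
    (prod_encode (thin_code (?c y), decode_snd (decode_fst y)), decode_snd y))"
  let ?null = "\<lambda>v. if v \<in> enc_sit ` null_starts D then 0 else (1 :: nat)"
  have "filtered_multiplier_approx D q = (\<lambda>y. if N \<le> code_length (?c y)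
      then (if ?null (code_take N (?c y)) = 0 then code_one
        else (if G (?c y) = 0 then ?r y else code_one))
      else code_one)"
    by (auto simp: filtered_multiplier_approx_def fun_eq_iff)
  moreover have "recursive1 ?null"
    by (intro recursive1_indicator_finite finite_imageI finite_null_starts)
  ultimately show ?thesis
    by (simp only:)
      (intro recursive1_if_le recursive1_if_zero recursive1_comp[OF \<open>recursive1 ?null\<close>]
        recursive1_comp[OF recursive_G] recursive1_comp[OF assms] recursive1_code_take
        recursive1_code_length recursive1_prod_encode recursive1_thin_code recursive1_decode_fst
        recursive1_decode_snd recursive1_ident recursive1_const)
qed

lemma rat_code_filtered_multiplier_approx:
  "rat_code (filtered_multiplier_approx D q (prod_encode (enc_sitx (p, b), n))) =
     (if N \<le> length p \<and> take N p \<notin> null_starts D \<and> kept p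
      then rat_code (q (prod_encode (enc_sitx (thin p, b), n))) else 1)"
  by (auto simp: filtered_multiplier_approx_def enc_sitx_def thin_code_enc_sit kept_def)

lemma lsc_filtered_multiplier:
  assumes "lsc_on enc_sitx (\<lambda>(s, x). D s x)"
  shows "lsc_on enc_sitx (\<lambda>(s, x). filtered_multiplier D s x)"
proof -
  obtain q where q: "recursive1 q"
    "\<And>d n. rat_code (q (prod_encode (enc_sitx d, n))) \<le> rat_code (q (prod_encode (enc_sitx d, Suc n)))"
    "\<And>d. (\<lambda>n. rat_code (q (prod_encode (enc_sitx d, n)))) \<longlonglongrightarrow> (\<lambda>(s, x). D s x) d"
    using assms unfolding lsc_on_def by blast
  have "rat_code (filtered_multiplier_approx D q (prod_encode (enc_sitx (p, b), n)))
      \<le> rat_code (filtered_multiplier_approx D q (prod_encode (enc_sitx (p, b), Suc n)))" for p b n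
    using q(2)[of "(thin p, b)" n] by (simp add: rat_code_filtered_multiplier_approx)
  moreover have "(\<lambda>n. rat_code (filtered_multiplier_approx D q (prod_encode (enc_sitx (p, b), n))))
      \<longlonglongrightarrow> filtered_multiplier D p b" for p b
  proof (cases "N \<le> length p \<and> take N p \<notin> null_starts D \<and> kept p")
    case True
    then show ?thesis
      using q(3)[of "(thin p, b)"]
      by (simp add: rat_code_filtered_multiplier_approx filtered_multiplier_def)
  next
    case False
    then show ?thesis
      unfolding rat_code_filtered_multiplier_approx filtered_multiplier_def if_not_P[OF False]
      by simp
  qed
  ultimately have "\<forall>d. (\<forall>n. rat_code (filtered_multiplier_approx D q (prod_encode (enc_sitx d, n)))
        \<le> rat_code (filtered_multiplier_approx D q (prod_encode (enc_sitx d, Suc n))))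
      \<and> (\<lambda>n. rat_code (filtered_multiplier_approx D q (prod_encode (enc_sitx d, n))))
        \<longlonglongrightarrow> (\<lambda>(s, x). filtered_multiplier D s x) d"
    by (simp add: split_paired_all)
  then show ?thesis
    unfolding lsc_on_def using recursive1_filtered_multiplier_approx[OF q(1)] by blast
qed

lemma random_ML_limit_interval: "random_ML \<phi> \<omega> \<Longrightarrow> random_ML (\<lambda>s. I) \<omega>"
  unfolding random_ML_def
proof (elim contrapos_nn exE conjE)
  fix T assume T: "lsc_on enc_sit T" "test_supermartingale (\<lambda>s. I) T" "unbounded_on T \<omega>"
  obtain M where M: "M \<ge> 1" "\<And>u. length u = N \<Longrightarrow> T u \<le> real M"
    using obtain_nat_bound_on_length[where f = T and n = N] by blast
  show "\<exists>T. lsc_on enc_sit T \<and> test_supermartingale \<phi> T \<and> unbounded_on T \<omega>"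
    using lsc_filtered_test[OF T(1) M(1)] test_supermartingale_filtered_test[OF T(2) M]
      unbounded_on_filtered_test[OF T(3) M(1)] by blast
qed

lemma random_C_limit_interval: "random_C \<phi> \<omega> \<Longrightarrow> random_C (\<lambda>s. I) \<omega>"
  unfolding random_C_def
proof (elim contrapos_nn exE conjE)
  fix T assume T: "computable_on enc_sit T" "test_supermartingale (\<lambda>s. I) T" "unbounded_on T \<omega>"
  obtain M where M: "M \<ge> 1" "\<And>u. length u = N \<Longrightarrow> T u \<le> real M"
    using obtain_nat_bound_on_length[where f = T and n = N] by blast
  show "\<exists>T. computable_on enc_sit T \<and> test_supermartingale \<phi> T \<and> unbounded_on T \<omega>"
    using computable_filtered_test[OF T(1) M(1)] test_supermartingale_filtered_test[OF T(2) M]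
      unbounded_on_filtered_test[OF T(3) M(1)] by blast
qed

lemma random_wML_limit_interval: "random_wML \<phi> \<omega> \<Longrightarrow> random_wML (\<lambda>s. I) \<omega>"
  unfolding random_wML_def
proof (elim contrapos_nn exE conjE)
  fix D assume D: "lsc_on enc_sitx (\<lambda>(s, x). D s x)" "test_supermartingale (\<lambda>s. I) (mult_proc D)"
    "unbounded_on (mult_proc D) \<omega>"
  show "\<exists>D. lsc_on enc_sitx (\<lambda>(s, x). D s x) \<and> test_supermartingale \<phi> (mult_proc D)
      \<and> unbounded_on (mult_proc D) \<omega>"
    using lsc_filtered_multiplier[OF D(1)] test_supermartingale_filtered_multiplier[OF D(2)]
      unbounded_on_filtered_multiplier[OF D(2,3)] by blast
qed

lemma random_S_limit_interval: "random_S \<phi> \<omega> \<Longrightarrow> random_S (\<lambda>s. I) \<omega>"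
  unfolding random_S_def
proof (elim contrapos_nn exE conjE)
  fix T \<tau> assume T: "computable_on enc_sit T" "test_supermartingale (\<lambda>s. I) T"
    and \<tau>: "computable_on enc_nat \<tau>" "mono \<tau>" "\<forall>n. \<tau> n \<ge> 0" "\<forall>B. \<exists>n. \<tau> n > B"
    and limsup: "limsup (\<lambda>n. ereal (T (prefix \<omega> n) - \<tau> n)) \<ge> 0"
  obtain M where M: "M \<ge> 1" "\<And>u. length u = N \<Longrightarrow> T u \<le> real M"
    using obtain_nat_bound_on_length[where f = T and n = N] by blast
  define \<tau>' where "\<tau>' n = \<tau> n / real M" for n
  have "computable_on enc_nat \<tau>'" unfolding \<tau>'_def by (rule computable_on_divide[OF \<tau>(1) M(1)])
  moreover have "mono \<tau>'" "\<forall>n. \<tau>' n \<ge> 0"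
    using \<tau>(2,3) M(1) by (auto simp: \<tau>'_def mono_def divide_right_mono)
  moreover have "\<forall>B. \<exists>n. \<tau>' n > B"
  proof
    fix B
    obtain n where "\<tau> n > B * real M" using \<tau>(4) by blast
    then show "\<exists>n. \<tau>' n > B" using M(1) by (intro exI[of _ n]) (simp add: \<tau>'_def pos_less_divide_eq)
  qed
  moreover have "limsup (\<lambda>n. ereal (filtered_test T M (prefix \<omega> n) - \<tau>' n)) \<ge> 0"
  proof -
    have "eventually (\<lambda>n. filtered_test T M (prefix \<omega> n) - \<tau>' n = (T (prefix \<omega> n) - \<tau> n) / real M)
        sequentially"
      by (auto simp: filtered_test_prefix \<tau>'_def diff_divide_distrib eventually_sequentially
          intro!: exI[of _ N])
    from limsup_eventually_divide[OF _ this] M(1) limsup show ?thesis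
      by (simp add: ereal_0_le_mult)
  qed
  moreover note computable_filtered_test[OF T(1) M(1)] test_supermartingale_filtered_test[OF T(2) M]
  ultimately show "\<exists>T \<tau>. computable_on enc_sit T \<and> test_supermartingale \<phi> T
      \<and> computable_on enc_nat \<tau> \<and> mono \<tau> \<and> (\<forall>n. \<tau> n \<ge> 0) \<and> (\<forall>B. \<exists>n. \<tau> n > B)
      \<and> limsup (\<lambda>n. ereal (T (prefix \<omega> n) - \<tau> n)) \<ge> 0"
    by (intro exI[of _ "filtered_test T M"] exI[of _ \<tau>']) simp
qed

lemma is_random_limit_interval:
  assumes "is_random R \<phi> \<omega>"
  shows "is_random R (\<lambda>s. I) \<omega>"
proof (cases R)
  case R_ML
  with assms random_ML_limit_interval show ?thesis by simp
next
  case R_wML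
  with assms random_wML_limit_interval show ?thesis by simp
next
  case R_C
  with assms random_C_limit_interval show ?thesis by simp
next
  case R_S
  with assms random_S_limit_interval show ?thesis by simp
next
  case R_CH
  with assms CH_cond_limit_interval show ?thesis by (simp add: random_CH_def)
next
  case R_wCH
  with assms CH_cond_limit_interval show ?thesis by (simp add: random_wCH_def)
qed

end

theorem proposition13:
  fixes R :: rnotion and \<phi> :: "bool list \<Rightarrow> real set" and \<omega> :: "nat \<Rightarrow> bool"
    and \<epsilon>1 \<epsilon>2 :: real
  assumes "forecasting_system \<phi>" and "computable_fs \<phi>"
    and "is_random R \<phi> \<omega>"
    and "\<epsilon>1 > 0" and "\<epsilon>2 > 0"
  shows "is_random R (\<lambda>s. limit_interval \<phi> \<omega> \<epsilon>1 \<epsilon>2) \<omega>"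
proof -
  interpret limit_forecast \<phi> \<omega> \<epsilon>1 \<epsilon>2
    using assms by unfold_locales auto
  obtain N G where "N \<ge> 1" "recursive1 G" "\<And>s. G (enc_sit s) = 0 \<Longrightarrow> \<phi> s \<subseteq> I"
    "\<And>n. N \<le> n \<Longrightarrow> G (enc_sit (prefix \<omega> n)) = 0"
    using recursive_test_for_subset_I[OF assms(2)] by metis
  then interpret limit_forecast_filter \<phi> \<omega> \<epsilon>1 \<epsilon>2 G N
    by unfold_locales auto
  show ?thesis using is_random_limit_interval[OF assms(3)] by (simp add: I_def)
qed

end
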